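(* Let $\mu\in\mathbb R$, $\sigma^2>0$, let $X_1,X_2,\dots$ be i.i.d. $\mathcal N(\mu,\sigma^2)$, fix $T\in(0,\infty)$, $M\in\mathbb N$, $\beta>0$, and let $w(t)=\exp(-\beta t^2)$. With $\Delta_m^{(n)}$ and $Q_m$ as in the context, $$n\big(\Delta_1^{(n)},\dots,\Delta_M^{(n)}\big)\xrightarrow{d}(Q_1,\dots,Q_M)\qquad(n\to\infty).$$
   Context: For a sample $X_1,\dots,X_n$: $\bar X=\frac1n\sum_k X_k$, $S_X^2=\frac1n\sum_k(X_k-\bar X)^2$, $\widehat\psi_X(t)=\frac1n\sum_k e^{itX_k}$, $\widehat\psi_X^*(t)=\exp(-it\bar X/S_X)\,\widehat\psi_X(t/S_X)$, $\psi_0(t)=e^{-t^2/2}$, $\psi(t)=\exp(i\mu t-\sigma^2t^2/2)$. For $m\in\mathbb N$: $S_m^{(n)}(t)=(\widehat\psi_X^*(t/\sqrt m))^m$, $D_m^{(n)}=S_{m+1}^{(n)}-S_m^{(n)}$, $\Delta_m^{(n)}=\int_{-T}^T w(t)|D_m^{(n)}(t)|^2dt$. Let $(G,Y_1,Y_2)$ be the joint weak limit in $C([-T/\sigma,T/\sigma];\mathbb C)\times\mathbb R^2$ of $\big(\sqrt n(\widehat\psi_X-\psi),\sqrt n(\bar X-\mu),\sqrt n(S_X-\sigma)\big)$ ($G$ is a centered complex Gaussian process with $\mathrm{Cov}(G(s),\overline{G(t)})=\psi(s-t)-\psi(s)\psi(-t)$, and $Y_1,Y_2$ are uncorrelated centered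 normals with variances $\sigma^2$ and $\sigma^2/2$). Define $G_0(t)=\exp(-it\mu/\sigma)G(t/\sigma)-\frac{it}{\sigma}\psi_0(t)Y_1+\frac{t^2}{\sigma}\psi_0(t)Y_2$ for $t\in[-T,T]$, $$H_m(t)=(m+1)\frac{G_0(t/\sqrt{m+1})}{\psi_0(t/\sqrt{m+1})}-m\frac{G_0(t/\sqrt m)}{\psi_0(t/\sqrt m)},\qquad Q_m=\int_{-T}^T w(t)\psi_0(t)^2|H_m(t)|^2dt.$$ *)

theory Defs
  imports "HOL-Probability.Probability"
begin

section \<open>Sample quantities (the sample X_1,...,X_n is the sequence x restricted to {1..n})\<close>

definition smean :: "nat \<Rightarrow> (nat \<Rightarrow> real) \<Rightarrow> real" where
  "smean n x = (\<Sum>k=1..n. x k) / real n"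

definition ssd :: "nat \<Rightarrow> (nat \<Rightarrow> real) \<Rightarrow> real" where
  "ssd n x = sqrt ((\<Sum>k=1..n. (x k - smean n x)^2) / real n)"

definition ecf :: "nat \<Rightarrow> (nat \<Rightarrow> real) \<Rightarrow> real \<Rightarrow> complex" where
  "ecf n x t = (\<Sum>k=1..n. exp (\<i> * complex_of_real (t * x k))) / of_nat n"

definition secf :: "nat \<Rightarrow> (nat \<Rightarrow> real) \<Rightarrow> real \<Rightarrow> complex" where
  "secf n x t = exp (- \<i> * complex_of_real (t * smean n x / ssd n x)) * ecf n x (t / ssd n x)"

definition Sm :: "nat \<Rightarrow> nat \<Rightarrow> (nat \<Rightarrow> real) \<Rightarrow> real \<Rightarrow> complex" where
  "Sm m n x t = (secf n x (t / sqrt (real m))) ^ m"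

definition Dm :: "nat \<Rightarrow> nat \<Rightarrow> (nat \<Rightarrow> real) \<Rightarrow> real \<Rightarrow> complex" where
  "Dm m n x t = Sm (m + 1) n x t - Sm m n x t"

definition Deltam :: "(real \<Rightarrow> real) \<Rightarrow> real \<Rightarrow> nat \<Rightarrow> nat \<Rightarrow> (nat \<Rightarrow> real) \<Rightarrow> real" where
  "Deltam w T m n x = integral {-T..T} (\<lambda>t. w t * (cmod (Dm m n x t))^2)"

definition psi0 :: "real \<Rightarrow> real" where
  "psi0 t = exp (- (t^2) / 2)"

definition psiN :: "real \<Rightarrow> real \<Rightarrow> real \<Rightarrow> complex" where
  "psiN \<mu> \<sigma> t = exp (\<i> * complex_of_real (\<mu> * t) - complex_of_real (\<sigma>^2 * t^2 / 2))"

definition G0 :: "real \<Rightarrow> real \<Rightarrow> (real \<Rightarrow> complex) \<Rightarrow> real \<Rightarrow> real \<Rightarrow> real \<Rightarrow> complex" where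
  "G0 \<mu> \<sigma> G y1 y2 t =
     exp (- \<i> * complex_of_real (t * \<mu> / \<sigma>)) * G (t / \<sigma>)
     - \<i> * complex_of_real (t / \<sigma> * psi0 t * y1)
     + complex_of_real (t^2 / \<sigma> * psi0 t * y2)"

definition Hm :: "real \<Rightarrow> real \<Rightarrow> (real \<Rightarrow> complex) \<Rightarrow> real \<Rightarrow> real \<Rightarrow> nat \<Rightarrow> real \<Rightarrow> complex" where
  "Hm \<mu> \<sigma> G y1 y2 m t =
     of_nat (m + 1) * G0 \<mu> \<sigma> G y1 y2 (t / sqrt (real (m + 1))) / complex_of_real (psi0 (t / sqrt (real (m + 1))))
     - of_nat m * G0 \<mu> \<sigma> G y1 y2 (t / sqrt (real m)) / complex_of_real (psi0 (t / sqrt (real m)))"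

definition Qm :: "(real \<Rightarrow> real) \<Rightarrow> real \<Rightarrow> real \<Rightarrow> real \<Rightarrow> (real \<Rightarrow> complex) \<Rightarrow> real \<Rightarrow> real \<Rightarrow> nat \<Rightarrow> real" where
  "Qm w T \<mu> \<sigma> G y1 y2 m = integral {-T..T} (\<lambda>t. w t * (psi0 t)^2 * (cmod (Hm \<mu> \<sigma> G y1 y2 m t))^2)"

text \<open>A function continuous on [-a,a] is identified with the bounded continuous function
  on the real line obtained by precomposing with the clamp onto [-a,a]; this is an isometric
  embedding of C([-a,a]) with the sup-norm into the bounded continuous functions.\<close>

definition clampC :: "real \<Rightarrow> (real \<Rightarrow> complex) \<Rightarrow> (real \<Rightarrow>\<^sub>C complex)" where
  "clampC a g = Bcontfun (\<lambda>t. g (max (- a) (min a t)))"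

definition weak_conv_on ::
  "'c::topological_space set \<Rightarrow> 'a measure \<Rightarrow> (nat \<Rightarrow> 'a \<Rightarrow> 'c) \<Rightarrow> 'b measure \<Rightarrow> ('b \<Rightarrow> 'c) \<Rightarrow> bool" where
  "weak_conv_on S P Z Q W \<longleftrightarrow>
     (\<forall>n. \<forall>\<omega>\<in>space P. Z n \<omega> \<in> S) \<and> (\<forall>\<omega>\<in>space Q. W \<omega> \<in> S) \<and>
     (\<forall>f :: 'c \<Rightarrow> real. continuous_on S f \<longrightarrow> bounded (f ` S) \<longrightarrow>
        (\<lambda>n. \<integral>\<omega>. f (Z n \<omega>) \<partial>P) \<longlonglongrightarrow> (\<integral>\<omega>. f (W \<omega>) \<partial>Q))"

text \<open>R^M is represented as the functions nat => real vanishing outside {1..M}, with the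
  (subspace of the) product topology.\<close>

definition RM :: "nat \<Rightarrow> (nat \<Rightarrow> real) set" where
  "RM M = {x. \<forall>k. k \<notin> {1..M} \<longrightarrow> x k = 0}"

end

(*
  The map sending a fluctuation triple (G, Y1, Y2) to (Q_1, ..., Q_M) is continuous, and the
  triple built from the sample converges weakly to (G, Y1, Y2) by hypothesis. It therefore
  suffices to show that n * Delta_m differs from Q_m evaluated at the sample triple by o(1),
  uniformly on every event where the triple stays bounded; tightness of the limit makes such
  events carry almost all the mass.

  On a bounded event the standardized empirical characteristic function satisfies
  psi*(a) = psi_0(a) + G_0(a) / sqrt n + o(1 / sqrt n) uniformly in |a| <= T. Raising to the
  power k gives sqrt n (S_k - psi_0)(t) = k psi_0(t) G_0(t / sqrt k) / psi_0(t / sqrt k) + o(1),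
  and differencing in k and integrating gives n * Delta_m = Q_m + o(1). The delicate term is the
  empirical process evaluated at the random point a / S_X instead of a / sigma: it is only known
  to be O(1 / sqrt n) in sup-norm, and its increment is controlled by bounding its derivative
  through its sup-norm and a second-order Taylor estimate, without any modulus of continuity.
*)

theory Submission
  imports Defs
begin


lemma norm_exp_sub_1_sub_le:
  fixes z :: "'a::{real_normed_algebra_1,banach}"
  assumes "norm z \<le> 1"
  shows "norm (exp z - 1 - z) \<le> norm z ^ 2"
proof -
  have "norm (exp z - 1 - z) = norm (\<Sum>n. inverse (fact (n + 2)) *\<^sub>R z ^ (n + 2))"
    by (subst exp_first_two_terms) (simp add: algebra_simps)
  also have "\<dots> \<le> (\<Sum>n. inverse (fact (n + 2)) * norm z ^ (n + 2))"
  proof (rule norm_suminf_le)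
    show "norm (inverse (fact (n + 2)) *\<^sub>R z ^ (n + 2)) \<le> inverse (fact (n + 2)) * norm z ^ (n + 2)" for n
      unfolding norm_scaleR by (intro mult_mono norm_power_ineq) auto
    show "summable (\<lambda>n. inverse (fact (n + 2)) * norm z ^ (n + 2))"
      by (rule summable_ignore_initial_segment[OF summable_exp])
  qed
  also have "\<dots> = exp (norm z) - 1 - norm z"
    by (subst exp_first_two_terms) simp
  also have "\<dots> \<le> norm z ^ 2"
    using exp_bound[of "norm z"] assms by simp
  finally show ?thesis .
qed

lemma norm_iexp_sub_1_sub_le: "cmod (iexp u - 1 - \<i> * u) \<le> u^2 / 2"
  using iexp_approx1[of u 1] by (simp add: power2_eq_square diff_diff_add)

lemma norm_iexp_diff_le: "cmod (iexp x - iexp y) \<le> \<bar>x - y\<bar>"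
proof -
  have "iexp x - iexp y = iexp y * (iexp (x - y) - 1)"
    by (simp add: algebra_simps flip: exp_add)
  then show ?thesis
    using iexp_approx1[of "x - y" 0] by (simp add: norm_mult)
qed

lemma norm_of_real_add_ii_le: "cmod (complex_of_real x + \<i> * complex_of_real y) \<le> \<bar>x\<bar> + \<bar>y\<bar>"
  using norm_triangle_ineq[of "complex_of_real x" "\<i> * complex_of_real y"] by (simp add: norm_mult)

lemma norm_power_add_sub_linear_le:
  fixes p d :: "'a::real_normed_field"
  assumes "norm p \<le> 1" "norm d \<le> 1"
  shows "norm ((p + d)^k - p^k - of_nat k * p^(k - 1) * d) \<le> 4^k * norm d ^ 2"
proof (induction k)
  case 0
  then show ?case by simp
next
  case (Suc k)
  define E where "E = (p + d)^k - p^k - of_nat k * p^(k - 1) * d"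
  have split: "(p + d)^Suc k - p^Suc k - of_nat (Suc k) * p^(Suc k - 1) * d
      = (p + d) * E + of_nat k * p^(k - 1) * d^2"
    by (cases k) (simp_all add: E_def algebra_simps power2_eq_square)
  have "norm (p + d) \<le> 2"
    using assms norm_triangle_ineq[of p d] by linarith
  then have "norm ((p + d) * E) \<le> 2 * (4^k * norm d ^ 2)"
    using Suc.IH unfolding E_def[symmetric] norm_mult by (intro mult_mono) auto
  moreover have "norm (of_nat k * p^(k - 1) * d^2) \<le> real k * 1 * norm d ^ 2"
    using assms(1) unfolding norm_mult norm_of_nat norm_power
    by (intro mult_right_mono mult_left_mono power_le_one) auto
  moreover have "real k \<le> 2 * 4^k"
  proof -
    have "real k \<le> 2^k"
      using less_exp[of k] by (metis less_imp_le of_nat_le_iff of_nat_numeral of_nat_power)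
    also have "(2::real)^k \<le> 4^k"
      by (intro power_mono) auto
    finally show ?thesis
      using zero_le_power[of "4::real" k] by linarith
  qed
  then have "real k * norm d ^ 2 \<le> 2 * 4^k * norm d ^ 2"
    by (intro mult_right_mono) auto
  ultimately show ?case
    unfolding split using norm_triangle_ineq[of "(p + d) * E" "of_nat k * p^(k - 1) * d^2"]
    by simp
qed

lemma norm_scaled_power_diff_sub_linear_le:
  fixes u p g :: "'a::real_normed_field" and s e C :: real
  assumes s: "s > 0" and p: "norm p \<le> 1" and u: "norm (u - p - g / of_real s) \<le> e / s"
    and g: "norm g \<le> C" and small: "(e + C) / s \<le> 1"
  shows "norm (of_real s * (u^k - p^k) - of_nat k * p^(k - 1) * g) \<le> 4^k * (e + C)^2 / s + real k * e"
proof -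
  define d where "d = u - p"
  have "norm d \<le> norm (u - p - g / of_real s) + norm (g / of_real s)"
    unfolding d_def by (rule order_trans[OF _ norm_triangle_ineq]) simp
  also have "\<dots> \<le> e / s + C / s"
    using u g s by (intro add_mono) (auto simp: norm_divide divide_right_mono)
  finally have d: "norm d \<le> (e + C) / s"
    by (simp add: add_divide_distrib)
  have "norm ((p + d)^k - p^k - of_nat k * p^(k - 1) * d) \<le> 4^k * norm d ^ 2"
    using norm_power_add_sub_linear_le[OF p] d small by simp
  also have "\<dots> \<le> 4^k * ((e + C) / s)^2"
    using d by (intro mult_left_mono power_mono) auto
  finally have E: "norm ((p + d)^k - p^k - of_nat k * p^(k - 1) * d) \<le> 4^k * ((e + C) / s)^2" .
  have pk: "norm (p^(k - 1)) \<le> 1"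
    using p by (simp add: norm_power power_le_one)
  have "of_real s * (u^k - p^k) - of_nat k * p^(k - 1) * g
      = of_real s * ((p + d)^k - p^k - of_nat k * p^(k - 1) * d)
        + of_nat k * p^(k - 1) * (of_real s * (u - p - g / of_real s))"
    unfolding d_def using s by (simp add: field_simps)
  also have "norm \<dots> \<le> s * norm ((p + d)^k - p^k - of_nat k * p^(k - 1) * d)
      + real k * norm (p^(k - 1)) * (s * norm (u - p - g / of_real s))"
    using s norm_triangle_ineq[of "of_real s * ((p + d)^k - p^k - of_nat k * p^(k - 1) * d)"
        "of_nat k * p^(k - 1) * (of_real s * (u - p - g / of_real s))"]
    unfolding norm_mult norm_of_real norm_of_nat by simp
  also have "\<dots> \<le> s * (4^k * ((e + C) / s)^2) + real k * 1 * (s * (e / s))"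
    using E pk u s by (intro add_mono mult_left_mono mult_mono) auto
  also have "\<dots> = 4^k * (e + C)^2 / s + real k * e"
    using s by (simp add: power2_eq_square)
  finally show ?thesis .
qed

lemma norm_deriv_le_of_remainder_bound:
  fixes h h' :: "real \<Rightarrow> 'a::real_normed_vector"
  assumes "0 < \<eta>" "\<eta> \<le> \<tau>" "\<eta> \<le> d0"
    and rem: "\<And>s d. \<bar>s\<bar> \<le> \<tau> \<Longrightarrow> \<bar>d\<bar> \<le> d0 \<Longrightarrow> norm (h (s + d) - h s - d *\<^sub>R h' s) \<le> B * d^2"
    and bnd: "\<And>s. \<bar>s\<bar> \<le> \<tau> \<Longrightarrow> norm (h s) \<le> A"
    and s: "\<bar>s\<bar> \<le> \<tau>"
  shows "norm (h' s) \<le> 2 * A / \<eta> + B * \<eta>"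
proof -
  define e where "e = (if s \<le> 0 then \<eta> else - \<eta>)"
  have ae: "\<bar>e\<bar> = \<eta>" and se: "\<bar>s + e\<bar> \<le> \<tau>"
    using s assms(1,2) by (auto simp: e_def)
  have "\<eta> * norm (h' s) = norm (e *\<^sub>R h' s)"
    using ae by simp
  also have "\<dots> \<le> norm (h (s + e) - h s) + norm (h (s + e) - h s - e *\<^sub>R h' s)"
    by (rule order_trans[OF _ norm_triangle_ineq4]) simp
  also have "\<dots> \<le> (norm (h (s + e)) + norm (h s)) + B * e^2"
    using rem[OF s] ae assms(3) by (intro add_mono norm_triangle_ineq4) auto
  also have "\<dots> \<le> 2 * A + B * \<eta>^2"
    using bnd[OF se] bnd[OF s] ae power2_abs[of e] by simp
  finally show ?thesis
    using assms(1) by (simp add: field_simps power2_eq_square)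
qed

lemma norm_diff_le_of_remainder_bound:
  fixes h h' :: "real \<Rightarrow> 'a::real_normed_vector"
  assumes "0 < \<eta>" "\<eta> \<le> \<tau>" "\<eta> \<le> d0"
    and rem: "\<And>s d. \<bar>s\<bar> \<le> \<tau> \<Longrightarrow> \<bar>d\<bar> \<le> d0 \<Longrightarrow> norm (h (s + d) - h s - d *\<^sub>R h' s) \<le> B * d^2"
    and bnd: "\<And>s. \<bar>s\<bar> \<le> \<tau> \<Longrightarrow> norm (h s) \<le> A"
    and s: "\<bar>s\<bar> \<le> \<tau>" and d: "\<bar>d\<bar> \<le> d0"
  shows "norm (h (s + d) - h s) \<le> \<bar>d\<bar> * (2 * A / \<eta> + B * \<eta>) + B * d^2"
proof -
  have "norm (h (s + d) - h s) \<le> norm (d *\<^sub>R h' s) + norm (h (s + d) - h s - d *\<^sub>R h' s)"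
    by (rule order_trans[OF _ norm_triangle_ineq]) simp
  also have "\<dots> \<le> \<bar>d\<bar> * (2 * A / \<eta> + B * \<eta>) + B * d^2"
    using norm_deriv_le_of_remainder_bound[OF assms(1-3) rem bnd s] rem[OF s d]
    by (intro add_mono) (auto intro: mult_left_mono)
  finally show ?thesis .
qed

lemma abs_weighted_norm_sq_diff_le:
  fixes u v :: "'a::real_normed_vector"
  assumes "norm (u - v) \<le> e" "norm v \<le> C" "e \<le> 1" "0 \<le> w" "w \<le> 1"
  shows "\<bar>w * (norm u)^2 - w * (norm v)^2\<bar> \<le> (2 * C + 1) * e"
proof -
  have "0 \<le> C"
    using assms(2) norm_ge_zero[of v] by linarith
  have "norm u \<le> C + 1" and "\<bar>norm u - norm v\<bar> \<le> e"
    using assms(1-3) norm_triangle_ineq2[of u v] norm_triangle_ineq3[of u v] by linarith+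
  then have "\<bar>(norm u)^2 - (norm v)^2\<bar> \<le> (2 * C + 1) * e"
    using assms(2) \<open>0 \<le> C\<close> unfolding power2_eq_square square_diff_square_factored abs_mult
    by (intro mult_mono) auto
  then have "w * \<bar>(norm u)^2 - (norm v)^2\<bar> \<le> 1 * ((2 * C + 1) * e)"
    using assms(4,5) by (intro mult_mono) auto
  then show ?thesis
    using assms(4) by (simp add: abs_mult right_diff_distrib[symmetric])
qed

lemma integral_weighted_norm_sq_diff_le:
  fixes u v :: "real \<Rightarrow> 'a::real_normed_vector"
  assumes "a \<le> b" "continuous_on {a..b} w" "continuous_on {a..b} u" "continuous_on {a..b} v"
    and "\<And>t. t \<in> {a..b} \<Longrightarrow> 0 \<le> w t \<and> w t \<le> 1"
    and "\<And>t. t \<in> {a..b} \<Longrightarrow> norm (u t - v t) \<le> e"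
    and "\<And>t. t \<in> {a..b} \<Longrightarrow> norm (v t) \<le> C"
    and "e \<le> 1"
  shows "\<bar>integral {a..b} (\<lambda>t. w t * (norm (u t))^2) - integral {a..b} (\<lambda>t. w t * (norm (v t))^2)\<bar>
           \<le> (2 * C + 1) * e * (b - a)"
proof -
  have cont: "continuous_on {a..b} (\<lambda>t. w t * (norm (u t))^2 - w t * (norm (v t))^2)"
    using assms(2-4) by (intro continuous_intros)
  have "integral {a..b} (\<lambda>t. w t * (norm (u t))^2) - integral {a..b} (\<lambda>t. w t * (norm (v t))^2)
      = integral {a..b} (\<lambda>t. w t * (norm (u t))^2 - w t * (norm (v t))^2)"
    using assms(2-4)
    by (intro integral_diff[symmetric] integrable_continuous_real continuous_intros)
  also have "\<bar>\<dots>\<bar> \<le> (2 * C + 1) * e * (b - a)"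
  proof -
    have "norm (w t * (norm (u t))^2 - w t * (norm (v t))^2) \<le> (2 * C + 1) * e" if "t \<in> {a..b}" for t
      using abs_weighted_norm_sq_diff_le[of "u t" "v t" e C "w t"] assms(5-8) that by auto
    then show ?thesis
      using integral_bound[OF assms(1) cont] by simp
  qed
  finally show ?thesis .
qed

lemma eventually_div_sqrt_le:
  assumes "\<delta> > 0"
  shows "\<forall>\<^sub>F n in sequentially. C / sqrt (real n) \<le> \<delta>"
proof -
  have "((\<lambda>n. C / sqrt (real n)) \<longlongrightarrow> 0) sequentially"
    by (intro tendsto_divide_0[OF tendsto_const] filterlim_at_top_imp_at_infinity
        filterlim_compose[OF sqrt_at_top filterlim_real_sequentially])
  then show ?thesis
    using order_tendstoD(2)[OF _ assms] by (blast intro: eventually_mono less_imp_le)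
qed

lemma abs_div_sqrt_le:
  assumes "k \<ge> 1" "\<bar>t\<bar> \<le> T"
  shows "\<bar>t / sqrt (real k)\<bar> \<le> T"
proof -
  have "\<bar>t\<bar> / sqrt (real k) \<le> \<bar>t\<bar> / 1"
    using assms(1) by (intro divide_left_mono) auto
  then show ?thesis
    using assms(2) by (simp add: abs_divide)
qed

lemma psi0_pos: "psi0 a > 0"
  unfolding psi0_def by simp

lemma psi0_le_1: "psi0 a \<le> 1"
  unfolding psi0_def by simp

lemma psi0_le_psi0_div_sqrt:
  assumes "k \<ge> 1"
  shows "psi0 t \<le> psi0 (t / sqrt (real k))"
proof -
  have "t^2 / real k \<le> t^2 / 1"
    using assms by (intro divide_left_mono) auto
  then show ?thesis
    using assms unfolding psi0_def by (simp add: power_divide)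
qed

lemma psi0_div_sqrt_power:
  assumes "k \<ge> 1"
  shows "psi0 (t / sqrt (real k)) ^ k = psi0 t"
proof -
  have "psi0 (t / sqrt (real k)) ^ k = exp (real k * (- (t^2 / real k) / 2))"
    unfolding psi0_def using assms by (simp add: power_divide flip: exp_of_nat_mult)
  also have "real k * (- (t^2 / real k) / 2) = - (t^2) / 2"
    using assms by (simp add: field_simps)
  finally show ?thesis
    unfolding psi0_def .
qed

lemma norm_psiN: "cmod (psiN \<mu> \<sigma> s) = exp (- (\<sigma>^2 * s^2 / 2))"
  unfolding psiN_def by (simp add: norm_exp_eq_Re)

lemma norm_psiN_le_1: "cmod (psiN \<mu> \<sigma> s) \<le> 1"
  unfolding norm_psiN by simp

definition psiN_deriv :: "real \<Rightarrow> real \<Rightarrow> real \<Rightarrow> complex" where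
  "psiN_deriv \<mu> \<sigma> s = (\<i> * complex_of_real \<mu> - complex_of_real (\<sigma>^2 * s)) * psiN \<mu> \<sigma> s"

lemma psiN_taylor2:
  fixes \<mu> \<sigma> \<tau> s d :: real
  defines "K \<equiv> \<bar>\<mu>\<bar> + \<sigma>^2 * \<tau> + \<sigma>^2"
  assumes "\<sigma> > 0" "\<bar>s\<bar> \<le> \<tau>" "\<bar>d\<bar> \<le> min 1 (1 / K)"
  shows "cmod (psiN \<mu> \<sigma> (s + d) - psiN \<mu> \<sigma> s - complex_of_real d * psiN_deriv \<mu> \<sigma> s)
           \<le> (K^2 + \<sigma>^2 / 2) * d^2"
proof -
  define z where "z = \<i> * complex_of_real (\<mu> * d) - complex_of_real (\<sigma>^2 * s * d + \<sigma>^2 * d^2 / 2)"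
  have K: "K > 0"
    unfolding K_def using assms(2,3) by (simp add: add_nonneg_pos add_pos_nonneg)
  have d1: "\<bar>d\<bar> \<le> 1" and "\<bar>d\<bar> \<le> 1 / K"
    using assms(4) by simp_all
  then have dK: "K * \<bar>d\<bar> \<le> 1"
    using K by (simp add: le_divide_eq mult.commute)
  have "\<i> * complex_of_real (\<mu> * (s + d)) - complex_of_real (\<sigma>^2 * (s + d)^2 / 2)
      = (\<i> * complex_of_real (\<mu> * s) - complex_of_real (\<sigma>^2 * s^2 / 2)) + z"
    unfolding z_def by (simp add: algebra_simps power2_eq_square)
  then have shift: "psiN \<mu> \<sigma> (s + d) = psiN \<mu> \<sigma> s * exp z"
    unfolding psiN_def by (simp add: exp_add)
  have "\<bar>\<sigma>^2 * s * d\<bar> \<le> \<sigma>^2 * \<tau> * \<bar>d\<bar>"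
    using assms(3) by (simp add: abs_mult mult_right_mono mult_left_mono)
  moreover have "\<sigma>^2 * d^2 / 2 \<le> \<sigma>^2 * \<bar>d\<bar>"
  proof -
    have "d^2 \<le> \<bar>d\<bar>"
      using d1 mult_left_le[of "\<bar>d\<bar>" "\<bar>d\<bar>"] by (simp add: power2_eq_square)
    then have "\<sigma>^2 * d^2 \<le> \<sigma>^2 * \<bar>d\<bar>"
      by (simp add: mult_left_mono)
    moreover have "0 \<le> \<sigma>^2 * \<bar>d\<bar>"
      by simp
    ultimately show ?thesis
      by linarith
  qed
  moreover have "cmod z \<le> \<bar>\<mu>\<bar> * \<bar>d\<bar> + \<bar>\<sigma>^2 * s * d + \<sigma>^2 * d^2 / 2\<bar>"
    using norm_triangle_ineq4[of "\<i> * complex_of_real (\<mu> * d)" "complex_of_real (\<sigma>^2 * s * d + \<sigma>^2 * d^2 / 2)"]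
    unfolding z_def norm_mult norm_ii norm_of_real abs_mult by linarith
  ultimately have zK: "cmod z \<le> K * \<bar>d\<bar>"
    unfolding K_def using abs_triangle_ineq[of "\<sigma>^2 * s * d" "\<sigma>^2 * d^2 / 2"]
    by (simp add: algebra_simps)
  have "cmod (exp z - 1 - z) \<le> cmod z ^ 2"
    using zK dK by (intro norm_exp_sub_1_sub_le) linarith
  also have "\<dots> \<le> (K * \<bar>d\<bar>)^2"
    using zK by (intro power_mono) auto
  finally have ez: "cmod (exp z - 1 - z) \<le> K^2 * d^2"
    by (simp add: power_mult_distrib)
  have "psiN \<mu> \<sigma> (s + d) - psiN \<mu> \<sigma> s - complex_of_real d * psiN_deriv \<mu> \<sigma> s
      = psiN \<mu> \<sigma> s * (exp z - 1 - z) - psiN \<mu> \<sigma> s * complex_of_real (\<sigma>^2 * d^2 / 2)"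
    unfolding shift psiN_deriv_def z_def by (simp add: algebra_simps power2_eq_square)
  also have "cmod \<dots> \<le> cmod (psiN \<mu> \<sigma> s) * cmod (exp z - 1 - z) + cmod (psiN \<mu> \<sigma> s) * (\<sigma>^2 * d^2 / 2)"
    using norm_triangle_ineq4[of "psiN \<mu> \<sigma> s * (exp z - 1 - z)" "psiN \<mu> \<sigma> s * complex_of_real (\<sigma>^2 * d^2 / 2)"]
    unfolding norm_mult norm_of_real by simp
  also have "\<dots> \<le> 1 * (K^2 * d^2) + 1 * (\<sigma>^2 * d^2 / 2)"
    using ez norm_psiN_le_1[of \<mu> \<sigma> s] by (intro add_mono mult_mono) auto
  finally show ?thesis
    by (simp add: algebra_simps)
qed

section \<open>Taylor expansion of the empirical characteristic function\<close>

definition ecf_deriv :: "nat \<Rightarrow> (nat \<Rightarrow> real) \<Rightarrow> real \<Rightarrow> complex" where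
  "ecf_deriv n x s = (\<Sum>k=1..n. \<i> * complex_of_real (x k) * iexp (s * x k)) / of_nat n"

lemma mean_squares_eq_ssd_smean:
  assumes "n \<ge> 1"
  shows "(\<Sum>k=1..n. (x k)^2) / real n = (ssd n x)^2 + (smean n x)^2"
proof -
  have n: "real n > 0"
    using assms by auto
  have sum: "(\<Sum>k=1..n. x k) = real n * smean n x"
    unfolding smean_def using n by simp
  have "(\<Sum>k=1..n. (x k - smean n x)^2)
      = (\<Sum>k=1..n. (x k)^2) - 2 * smean n x * (\<Sum>k=1..n. x k) + real n * (smean n x)^2"
    by (simp add: power2_diff sum.distrib sum_subtractf sum_distrib_left algebra_simps)
  also have "\<dots> = (\<Sum>k=1..n. (x k)^2) - real n * (smean n x)^2"
    unfolding sum by (simp add: power2_eq_square)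
  finally have centred: "(\<Sum>k=1..n. (x k - smean n x)^2) = (\<Sum>k=1..n. (x k)^2) - real n * (smean n x)^2" .
  have "(ssd n x)^2 = (\<Sum>k=1..n. (x k - smean n x)^2) / real n"
    unfolding ssd_def by (simp add: sum_nonneg)
  then show ?thesis
    unfolding centred using n by (simp add: field_simps)
qed

lemma ecf_taylor2:
  assumes "n \<ge> 1"
  shows "cmod (ecf n x (s + d) - ecf n x s - complex_of_real d * ecf_deriv n x s)
           \<le> ((ssd n x)^2 + (smean n x)^2) / 2 * d^2"
proof -
  have summand: "iexp ((s + d) * x k) - iexp (s * x k) - complex_of_real d * (\<i> * complex_of_real (x k) * iexp (s * x k))
      = iexp (s * x k) * (iexp (d * x k) - 1 - \<i> * complex_of_real (d * x k))" for k
  proof -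
    have "iexp ((s + d) * x k) = iexp (s * x k) * iexp (d * x k)"
      by (simp add: distrib_right distrib_left flip: exp_add)
    then show ?thesis
      by (simp add: algebra_simps)
  qed
  have "ecf n x (s + d) - ecf n x s - complex_of_real d * ecf_deriv n x s
      = (\<Sum>k=1..n. iexp (s * x k) * (iexp (d * x k) - 1 - \<i> * complex_of_real (d * x k))) / of_nat n"
    unfolding ecf_def ecf_deriv_def summand[symmetric]
    by (simp add: sum_subtractf sum_distrib_left diff_divide_distrib)
  also have "cmod \<dots> \<le> (\<Sum>k=1..n. (d * x k)^2 / 2) / real n"
    unfolding norm_divide norm_of_nat
  proof (intro divide_right_mono order_trans[OF norm_sum sum_mono])
    show "cmod (iexp (s * x k) * (iexp (d * x k) - 1 - \<i> * complex_of_real (d * x k))) \<le> (d * x k)^2 / 2" for k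
      using norm_iexp_sub_1_sub_le[of "d * x k"] by (simp add: norm_mult)
  qed simp
  also have "\<dots> = (\<Sum>k=1..n. (x k)^2) / real n / 2 * d^2"
    by (simp add: sum_distrib_left sum_divide_distrib power_mult_distrib mult.commute)
  finally show ?thesis
    unfolding mean_squares_eq_ssd_smean[OF assms] .
qed

lemma ecf_dev_taylor2:
  fixes \<mu> \<sigma> \<tau> s d :: real
  defines "K \<equiv> \<bar>\<mu>\<bar> + \<sigma>^2 * \<tau> + \<sigma>^2"
  assumes "n \<ge> 1" "\<sigma> > 0" "\<bar>s\<bar> \<le> \<tau>" "\<bar>d\<bar> \<le> min 1 (1 / K)"
  shows "cmod ((ecf n x (s + d) - psiN \<mu> \<sigma> (s + d)) - (ecf n x s - psiN \<mu> \<sigma> s)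
            - complex_of_real d * (ecf_deriv n x s - psiN_deriv \<mu> \<sigma> s))
          \<le> (((ssd n x)^2 + (smean n x)^2) / 2 + K^2 + \<sigma>^2 / 2) * d^2"
proof -
  have "(ecf n x (s + d) - psiN \<mu> \<sigma> (s + d)) - (ecf n x s - psiN \<mu> \<sigma> s)
            - complex_of_real d * (ecf_deriv n x s - psiN_deriv \<mu> \<sigma> s)
      = (ecf n x (s + d) - ecf n x s - complex_of_real d * ecf_deriv n x s)
        - (psiN \<mu> \<sigma> (s + d) - psiN \<mu> \<sigma> s - complex_of_real d * psiN_deriv \<mu> \<sigma> s)"
    by (simp add: algebra_simps)
  then have "cmod ((ecf n x (s + d) - psiN \<mu> \<sigma> (s + d)) - (ecf n x s - psiN \<mu> \<sigma> s)
            - complex_of_real d * (ecf_deriv n x s - psiN_deriv \<mu> \<sigma> s))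
      \<le> cmod (ecf n x (s + d) - ecf n x s - complex_of_real d * ecf_deriv n x s)
        + cmod (psiN \<mu> \<sigma> (s + d) - psiN \<mu> \<sigma> s - complex_of_real d * psiN_deriv \<mu> \<sigma> s)"
    by (metis norm_triangle_ineq4)
  also have "\<dots> \<le> ((ssd n x)^2 + (smean n x)^2) / 2 * d^2 + (K^2 + \<sigma>^2 / 2) * d^2"
    using ecf_taylor2[OF assms(2)] psiN_taylor2[OF assms(3-5)[unfolded K_def]]
    unfolding K_def by (rule add_mono)
  finally show ?thesis
    by (simp add: algebra_simps)
qed

lemma norm_ecf_diff_le: "cmod (ecf n x s - ecf n y s) \<le> \<bar>s\<bar> * (\<Sum>k=1..n. \<bar>x k - y k\<bar>) / real n"
proof -
  have "ecf n x s - ecf n y s = (\<Sum>k=1..n. iexp (s * x k) - iexp (s * y k)) / of_nat n"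
    unfolding ecf_def by (simp add: diff_divide_distrib sum_subtractf)
  also have "cmod \<dots> \<le> (\<Sum>k=1..n. \<bar>s\<bar> * \<bar>x k - y k\<bar>) / real n"
    unfolding norm_divide norm_of_nat
  proof (intro divide_right_mono order_trans[OF norm_sum sum_mono])
    show "cmod (iexp (s * x k) - iexp (s * y k)) \<le> \<bar>s\<bar> * \<bar>x k - y k\<bar>" for k
    proof -
      have "\<bar>s * x k - s * y k\<bar> = \<bar>s\<bar> * \<bar>x k - y k\<bar>"
        by (simp add: abs_mult right_diff_distrib[symmetric])
      then show ?thesis
        using norm_iexp_diff_le[of "s * x k" "s * y k"] by linarith
    qed
  qed simp
  finally show ?thesis
    by (simp add: sum_distrib_left)
qed

section \<open>First-order expansion of the standardized empirical characteristic function\<close>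

lemma standardization_bounds:
  fixes \<sigma> T r xb S a \<mu> :: real
  assumes "\<sigma> > 0" "T \<ge> 0" "r \<ge> 0" "\<bar>xb - \<mu>\<bar> \<le> r" "\<bar>S - \<sigma>\<bar> \<le> r" "r \<le> \<sigma> / 2" "\<bar>a\<bar> \<le> T"
  shows "\<bar>\<mu> * (a / S) - a * xb / S\<bar> \<le> 2 * T / \<sigma> * r"
    and "\<bar>a^2 / 2 - \<sigma>^2 * (a / S)^2 / 2\<bar> \<le> 5 * T^2 / \<sigma> * r"
    and "\<bar>(\<mu> * (a / S) - a * xb / S) - (- a * (xb - \<mu>) / \<sigma>)\<bar> \<le> 2 * T / \<sigma>^2 * r^2"
    and "\<bar>(a^2 / 2 - \<sigma>^2 * (a / S)^2 / 2) - a^2 * (S - \<sigma>) / \<sigma>\<bar> \<le> 8 * T^2 / \<sigma>^2 * r^2"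
    and "\<bar>a / S - a / \<sigma>\<bar> \<le> 2 * T / \<sigma>^2 * r"
    and "\<bar>a * xb / S - a * \<mu> / \<sigma>\<bar> \<le> 2 * T * (\<sigma> + \<bar>\<mu>\<bar>) / \<sigma>^2 * r"
proof -
  have S1: "S \<ge> \<sigma> / 2" using assms by linarith
  have S2: "S \<le> 3 * \<sigma> / 2" using assms by linarith
  have Sp: "S > 0" using S1 assms(1) by linarith
  define u where "u = xb - \<mu>"
  define v where "v = S - \<sigma>"
  have au: "\<bar>a\<bar> * \<bar>u\<bar> \<le> T * r" using assms u_def by (intro mult_mono) auto
  have a2: "a^2 \<le> T^2" using assms(7) by (metis abs_ge_zero power2_abs power_mono)
  show "\<bar>\<mu> * (a / S) - a * xb / S\<bar> \<le> 2 * T / \<sigma> * r"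
  proof -
    have "\<mu> * (a / S) - a * xb / S = - (a * u) / S" unfolding u_def using Sp by (simp add: field_simps)
    then have "\<bar>\<mu> * (a / S) - a * xb / S\<bar> = \<bar>a\<bar> * \<bar>u\<bar> / S" using Sp by (simp add: abs_mult)
    also have "\<dots> \<le> (T * r) / (\<sigma> / 2)"
      using au S1 assms by (intro frac_le) (auto intro: mult_nonneg_nonneg)
    also have "\<dots> = 2 * T / \<sigma> * r" by simp
    finally show ?thesis .
  qed
  have e2: "a^2 / 2 - \<sigma>^2 * (a / S)^2 / 2 = a^2 * v * (S + \<sigma>) / (2 * S^2)"
    unfolding v_def using Sp by (simp add: field_simps power2_eq_square)
  show "\<bar>a^2 / 2 - \<sigma>^2 * (a / S)^2 / 2\<bar> \<le> 5 * T^2 / \<sigma> * r"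
  proof -
    have "\<bar>a^2 / 2 - \<sigma>^2 * (a / S)^2 / 2\<bar> = a^2 * \<bar>v\<bar> * (S + \<sigma>) / (2 * S^2)"
      unfolding e2 using Sp assms(1) by (simp add: abs_mult)
    also have "\<dots> \<le> (T^2 * r * (5 * \<sigma> / 2)) / (\<sigma>^2 / 2)"
    proof (intro frac_le mult_mono)
      show "\<sigma>\<^sup>2 / 2 \<le> 2 * S\<^sup>2"
      proof -
        have "(\<sigma>/2)^2 \<le> S^2" using S1 assms(1) by (intro power_mono) auto
        then show ?thesis by (simp add: power_divide)
      qed
    qed (use a2 assms v_def S2 in auto)
    also have "\<dots> = 5 * T^2 / \<sigma> * r" using assms(1) by (simp add: field_simps power2_eq_square)
    finally show ?thesis .
  qed
  show "\<bar>(\<mu> * (a / S) - a * xb / S) - (- a * (xb - \<mu>) / \<sigma>)\<bar> \<le> 2 * T / \<sigma>^2 * r^2"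
  proof -
    have "(\<mu> * (a / S) - a * xb / S) - (- a * (xb - \<mu>) / \<sigma>) = a * u * v / (S * \<sigma>)"
      unfolding u_def v_def using Sp assms(1) by (simp add: field_simps)
    then have "\<bar>(\<mu> * (a / S) - a * xb / S) - (- a * (xb - \<mu>) / \<sigma>)\<bar> = (\<bar>a\<bar> * \<bar>u\<bar>) * \<bar>v\<bar> / (S * \<sigma>)"
      using Sp assms(1) by (simp add: abs_mult)
    also have "\<dots> \<le> ((T * r) * r) / (\<sigma> / 2 * \<sigma>)"
      using au S1 assms v_def u_def by (intro frac_le mult_mono) (auto intro: mult_nonneg_nonneg)
    also have "\<dots> = 2 * T / \<sigma>^2 * r^2" using assms(1) by (simp add: field_simps power2_eq_square)
    finally show ?thesis .
  qed
  show "\<bar>(a^2 / 2 - \<sigma>^2 * (a / S)^2 / 2) - a^2 * (S - \<sigma>) / \<sigma>\<bar> \<le> 8 * T^2 / \<sigma>^2 * r^2"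
  proof -
    have "(a^2 / 2 - \<sigma>^2 * (a / S)^2 / 2) - a^2 * (S - \<sigma>) / \<sigma> = - (a^2 * v^2 * (\<sigma> + 2 * S)) / (2 * S^2 * \<sigma>)"
      unfolding v_def using Sp assms(1) by (simp add: field_simps power2_eq_square)
    then have "\<bar>(a^2 / 2 - \<sigma>^2 * (a / S)^2 / 2) - a^2 * (S - \<sigma>) / \<sigma>\<bar> = a^2 * v^2 * (\<sigma> + 2 * S) / (2 * S^2 * \<sigma>)"
      using Sp assms(1) by (simp add: abs_mult)
    also have "\<dots> \<le> (T^2 * r^2 * (4 * \<sigma>)) / (\<sigma>^2 / 2 * \<sigma>)"
    proof (intro frac_le mult_mono)
      show "\<sigma>\<^sup>2 / 2 \<le> 2 * S\<^sup>2"
      proof -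
        have "(\<sigma>/2)^2 \<le> S^2" using S1 assms(1) by (intro power_mono) auto
        then show ?thesis by (simp add: power_divide)
      qed
      show "v^2 \<le> r^2" using assms(5) v_def by (metis abs_ge_zero power2_abs power_mono)
    qed (use a2 assms v_def S2 in auto)
    also have "\<dots> = 8 * T^2 / \<sigma>^2 * r^2" using assms(1) by (simp add: field_simps power2_eq_square)
    finally show ?thesis .
  qed
  show "\<bar>a / S - a / \<sigma>\<bar> \<le> 2 * T / \<sigma>^2 * r"
  proof -
    have "a / S - a / \<sigma> = - (a * v) / (S * \<sigma>)"
      unfolding v_def using Sp assms(1) by (simp add: field_simps)
    then have "\<bar>a / S - a / \<sigma>\<bar> = \<bar>a\<bar> * \<bar>v\<bar> / (S * \<sigma>)"
      using Sp assms(1) by (simp add: abs_mult)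
    also have "\<dots> \<le> (T * r) / (\<sigma> / 2 * \<sigma>)"
      using assms S1 v_def by (intro frac_le mult_mono) auto
    also have "\<dots> = 2 * T / \<sigma>^2 * r"
      using assms(1) by (simp add: field_simps power2_eq_square)
    finally show ?thesis .
  qed
  show "\<bar>a * xb / S - a * \<mu> / \<sigma>\<bar> \<le> 2 * T * (\<sigma> + \<bar>\<mu>\<bar>) / \<sigma>^2 * r"
  proof -
    have "a * xb / S - a * \<mu> / \<sigma> = a * (\<sigma> * u - \<mu> * v) / (S * \<sigma>)"
      unfolding u_def v_def using Sp assms(1) by (simp add: field_simps)
    then have "\<bar>a * xb / S - a * \<mu> / \<sigma>\<bar> = \<bar>a\<bar> * \<bar>\<sigma> * u - \<mu> * v\<bar> / (S * \<sigma>)"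
      using Sp assms(1) by (simp add: abs_mult)
    also have "\<dots> \<le> (T * (\<sigma> * r + \<bar>\<mu>\<bar> * r)) / (\<sigma> / 2 * \<sigma>)"
    proof (intro frac_le mult_mono)
      have "\<bar>\<sigma> * u\<bar> \<le> \<sigma> * r" "\<bar>\<mu> * v\<bar> \<le> \<bar>\<mu>\<bar> * r"
        using assms u_def v_def by (simp_all add: abs_mult mult_left_mono)
      then show "\<bar>\<sigma> * u - \<mu> * v\<bar> \<le> \<sigma> * r + \<bar>\<mu>\<bar> * r"
        by linarith
    qed (use assms S1 in auto)
    also have "\<dots> = 2 * T * (\<sigma> + \<bar>\<mu>\<bar>) / \<sigma>^2 * r"
      using assms(1) by (simp add: field_simps power2_eq_square)
    finally show ?thesis .
  qed
qed

lemma norm_standardized_psiN_sub_linear_le: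
  fixes \<sigma> T r xb S a \<mu> :: real
  defines "C1 \<equiv> 2 * T / \<sigma> + 5 * T^2 / \<sigma>"
  defines "C2 \<equiv> 2 * T / \<sigma>^2 + 8 * T^2 / \<sigma>^2"
  assumes "\<sigma> > 0" "T \<ge> 0" "r \<ge> 0" "\<bar>xb - \<mu>\<bar> \<le> r" "\<bar>S - \<sigma>\<bar> \<le> r" "r \<le> \<sigma> / 2" "\<bar>a\<bar> \<le> T"
    and small: "C1 * r \<le> 1"
  shows "cmod (exp (- \<i> * complex_of_real (a * xb / S)) * psiN \<mu> \<sigma> (a / S)
           - complex_of_real (psi0 a) * (1 + (complex_of_real (a^2 * (S - \<sigma>) / \<sigma>) + \<i> * complex_of_real (- a * (xb - \<mu>) / \<sigma>))))
         \<le> (C1^2 + C2) * r^2"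
proof -
  note rb = standardization_bounds[OF assms(3-9)]
  define di where "di = \<mu> * (a / S) - a * xb / S"
  define dr where "dr = a^2 / 2 - \<sigma>^2 * (a / S)^2 / 2"
  define Lr where "Lr = a^2 * (S - \<sigma>) / \<sigma>"
  define Li where "Li = - a * (xb - \<mu>) / \<sigma>"
  define \<delta> where "\<delta> = complex_of_real dr + \<i> * complex_of_real di"
  define L where "L = complex_of_real Lr + \<i> * complex_of_real Li"
  have e: "exp (- \<i> * complex_of_real (a * xb / S)) * psiN \<mu> \<sigma> (a / S) = complex_of_real (psi0 a) * exp \<delta>"
  proof -
    have "exp (- \<i> * complex_of_real (a * xb / S)) * psiN \<mu> \<sigma> (a / S)
        = exp (- \<i> * complex_of_real (a * xb / S) + (\<i> * complex_of_real (\<mu> * (a / S)) - complex_of_real (\<sigma>\<^sup>2 * (a / S)\<^sup>2 / 2)))"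
      unfolding psiN_def exp_add ..
    also have "- \<i> * complex_of_real (a * xb / S) + (\<i> * complex_of_real (\<mu> * (a / S)) - complex_of_real (\<sigma>\<^sup>2 * (a / S)\<^sup>2 / 2))
        = complex_of_real (- (a^2) / 2) + \<delta>"
      unfolding \<delta>_def dr_def di_def by (simp add: algebra_simps)
    also have "exp (complex_of_real (- (a^2) / 2) + \<delta>) = complex_of_real (psi0 a) * exp \<delta>"
      unfolding psi0_def exp_add by (simp only: exp_of_real[symmetric])
    finally show ?thesis .
  qed
  have "cmod \<delta> \<le> \<bar>dr\<bar> + \<bar>di\<bar>" unfolding \<delta>_def by (rule norm_of_real_add_ii_le)
  also have "\<dots> \<le> 5 * T^2 / \<sigma> * r + 2 * T / \<sigma> * r" using rb(1,2) unfolding dr_def di_def by linarith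
  also have "\<dots> = C1 * r" unfolding C1_def by (simp add: algebra_simps)
  finally have d1: "cmod \<delta> \<le> C1 * r" .
  have "cmod (\<delta> - L) = cmod (complex_of_real (dr - Lr) + \<i> * complex_of_real (di - Li))"
    unfolding \<delta>_def L_def by (simp add: algebra_simps)
  also have "\<dots> \<le> \<bar>dr - Lr\<bar> + \<bar>di - Li\<bar>" by (rule norm_of_real_add_ii_le)
  also have "\<dots> \<le> 8 * T^2 / \<sigma>^2 * r^2 + 2 * T / \<sigma>^2 * r^2" using rb(3,4) unfolding dr_def di_def Lr_def Li_def by linarith
  also have "\<dots> = C2 * r^2" unfolding C2_def by (simp add: algebra_simps)
  finally have d2: "cmod (\<delta> - L) \<le> C2 * r^2" .
  have "cmod (exp \<delta> - 1 - \<delta>) \<le> cmod \<delta> ^ 2" using d1 small by (intro norm_exp_sub_1_sub_le) linarith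
  also have "\<dots> \<le> (C1 * r)^2" using d1 by (intro power_mono) auto
  finally have d3: "cmod (exp \<delta> - 1 - \<delta>) \<le> C1^2 * r^2" by (simp add: power_mult_distrib)
  have "cmod (exp \<delta> - 1 - L) = cmod ((exp \<delta> - 1 - \<delta>) + (\<delta> - L))" by (simp add: algebra_simps)
  also have "\<dots> \<le> cmod (exp \<delta> - 1 - \<delta>) + cmod (\<delta> - L)"
    by (rule norm_triangle_ineq)
  also have "\<dots> \<le> (C1^2 + C2) * r^2" using d2 d3 by (simp add: algebra_simps)
  finally have d4: "cmod (exp \<delta> - 1 - L) \<le> (C1^2 + C2) * r^2" .
  have "exp (- \<i> * complex_of_real (a * xb / S)) * psiN \<mu> \<sigma> (a / S)
           - complex_of_real (psi0 a) * (1 + (complex_of_real (a^2 * (S - \<sigma>) / \<sigma>) + \<i> * complex_of_real (- a * (xb - \<mu>) / \<sigma>)))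
      = complex_of_real (psi0 a) * (exp \<delta> - 1 - L)"
    unfolding e L_def Lr_def Li_def by (simp add: algebra_simps)
  then have "cmod (exp (- \<i> * complex_of_real (a * xb / S)) * psiN \<mu> \<sigma> (a / S)
           - complex_of_real (psi0 a) * (1 + (complex_of_real (a^2 * (S - \<sigma>) / \<sigma>) + \<i> * complex_of_real (- a * (xb - \<mu>) / \<sigma>))))
      = psi0 a * cmod (exp \<delta> - 1 - L)" using psi0_pos[of a] by (simp add: norm_mult)
  also have "\<dots> \<le> 1 * ((C1^2 + C2) * r^2)" using d4 psi0_le_1[of a] psi0_pos[of a] by (intro mult_mono) auto
  finally show ?thesis by simp
qed

text \<open>The increment of the empirical process between a / S and a / \<sigma> is bounded through
  its derivative, which norm_deriv_le_of_remainder_bound controls by the sup-norm of the process.\<close>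

lemma norm_rescaled_ecf_dev_diff_le:
  fixes \<mu> \<sigma> T r \<eta> a :: real and n :: nat and x :: "nat \<Rightarrow> real"
  defines "\<tau> \<equiv> T / \<sigma>"
  defines "K \<equiv> \<bar>\<mu>\<bar> + \<sigma>^2 * \<tau> + \<sigma>^2"
  defines "d0 \<equiv> min 1 (1 / K)"
  defines "B \<equiv> ((3 * \<sigma> / 2)^2 + (\<bar>\<mu>\<bar> + \<sigma> / 2)^2) / 2 + K^2 + \<sigma>^2 / 2"
  defines "c \<equiv> 2 * T / \<sigma>^2"
  defines "h \<equiv> \<lambda>s. ecf n x s - psiN \<mu> \<sigma> s"
  assumes n1: "n \<ge> 1" and sp: "\<sigma> > 0" and Tp: "T > 0" and rp: "r \<ge> 0"
    and xb: "\<bar>smean n x - \<mu>\<bar> \<le> r" and Sb: "\<bar>ssd n x - \<sigma>\<bar> \<le> r" and rs: "r \<le> \<sigma> / 2"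
    and ab: "\<bar>a\<bar> \<le> T"
    and hb: "\<And>s. \<bar>s\<bar> \<le> \<tau> \<Longrightarrow> cmod (h s) \<le> r"
    and eta: "0 < \<eta>" "\<eta> \<le> \<tau>" "\<eta> \<le> d0" and crd: "c * r \<le> d0"
  shows "cmod (exp (- \<i> * complex_of_real (a * smean n x / ssd n x)) * h (a / ssd n x)
              - exp (- \<i> * complex_of_real (a * \<mu> / \<sigma>)) * h (a / \<sigma>))
         \<le> c * r * (2 * r / \<eta> + B * \<eta>) + B * (c * r)^2 + 2 * T * (\<sigma> + \<bar>\<mu>\<bar>) / \<sigma>^2 * r * r"
proof -
  define S xm where "S = ssd n x" and "xm = smean n x"
  note sb = standardization_bounds[OF sp less_imp_le[OF Tp] rp xb Sb rs ab, folded S_def xm_def]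
  have "\<bar>S\<bar> \<le> 3 * \<sigma> / 2" "\<bar>xm\<bar> \<le> \<bar>\<mu>\<bar> + \<sigma> / 2"
    using Sb xb rs sp unfolding S_def xm_def by linarith+
  then have "S^2 \<le> (3 * \<sigma> / 2)^2" "xm^2 \<le> (\<bar>\<mu>\<bar> + \<sigma> / 2)^2"
    by (metis abs_ge_zero power2_abs power_mono)+
  then have Bx: "(S^2 + xm^2) / 2 + K^2 + \<sigma>^2 / 2 \<le> B"
    unfolding B_def by simp
  have rem: "cmod (h (s + d) - h s - d *\<^sub>R (ecf_deriv n x s - psiN_deriv \<mu> \<sigma> s)) \<le> B * d^2"
    if "\<bar>s\<bar> \<le> \<tau>" "\<bar>d\<bar> \<le> d0" for s d
    using ecf_dev_taylor2[OF n1 sp that(1) that(2)[unfolded d0_def K_def]] Bx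
    unfolding h_def K_def d0_def S_def xm_def scaleR_conv_of_real
    by (smt (verit) mult_right_mono zero_le_power2)
  have s0: "\<bar>a / \<sigma>\<bar> \<le> \<tau>"
    unfolding \<tau>_def using ab sp by (simp add: abs_divide divide_right_mono)
  have d: "\<bar>a / S - a / \<sigma>\<bar> \<le> c * r"
    using sb(5) unfolding c_def .
  have "cmod (h (a / S) - h (a / \<sigma>)) \<le> \<bar>a / S - a / \<sigma>\<bar> * (2 * r / \<eta> + B * \<eta>) + B * (a / S - a / \<sigma>)^2"
    using norm_diff_le_of_remainder_bound[OF eta rem hb s0, of "a / S - a / \<sigma>"] d crd by simp
  also have "\<dots> \<le> c * r * (2 * r / \<eta> + B * \<eta>) + B * (c * r)^2"
  proof -
    have "(a / S - a / \<sigma>)^2 \<le> (c * r)^2"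
      using d by (metis abs_ge_zero power2_abs power_mono)
    moreover have "B \<ge> 0"
      unfolding B_def by simp
    ultimately show ?thesis
      using d eta(1) rp by (intro add_mono mult_right_mono mult_left_mono) auto
  qed
  finally have hdiff: "cmod (h (a / S) - h (a / \<sigma>)) \<le> c * r * (2 * r / \<eta> + B * \<eta>) + B * (c * r)^2" .
  define e1 e0 where "e1 = exp (- \<i> * complex_of_real (a * xm / S))"
    and "e0 = exp (- \<i> * complex_of_real (a * \<mu> / \<sigma>))"
  have e1: "cmod e1 = 1"
    unfolding e1_def by (simp add: norm_exp_eq_Re)
  have ediff: "cmod (e1 - e0) \<le> 2 * T * (\<sigma> + \<bar>\<mu>\<bar>) / \<sigma>^2 * r"
    using norm_iexp_diff_le[of "- (a * xm / S)" "- (a * \<mu> / \<sigma>)"] sb(6)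
    unfolding e1_def e0_def by simp
  have "cmod (e1 * h (a / S) - e0 * h (a / \<sigma>))
      = cmod (e1 * (h (a / S) - h (a / \<sigma>)) + (e1 - e0) * h (a / \<sigma>))"
    by (simp add: algebra_simps)
  also have "\<dots> \<le> cmod (h (a / S) - h (a / \<sigma>)) + cmod (e1 - e0) * cmod (h (a / \<sigma>))"
    using norm_triangle_ineq[of "e1 * (h (a / S) - h (a / \<sigma>))" "(e1 - e0) * h (a / \<sigma>)"]
    unfolding norm_mult e1 by simp
  also have "\<dots> \<le> (c * r * (2 * r / \<eta> + B * \<eta>) + B * (c * r)^2) + 2 * T * (\<sigma> + \<bar>\<mu>\<bar>) / \<sigma>^2 * r * r"
    using hdiff ediff hb[OF s0] sp Tp rp by (intro add_mono mult_mono) auto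
  finally show ?thesis
    unfolding S_def xm_def e1_def e0_def .
qed

lemma secf_sub_G0_eq:
  "secf n x a - complex_of_real (psi0 a)
     - G0 \<mu> \<sigma> (\<lambda>s. ecf n x s - psiN \<mu> \<sigma> s) (smean n x - \<mu>) (ssd n x - \<sigma>) a
   = (exp (- \<i> * complex_of_real (a * smean n x / ssd n x)) * psiN \<mu> \<sigma> (a / ssd n x)
        - complex_of_real (psi0 a) * (1 + (complex_of_real (a^2 * (ssd n x - \<sigma>) / \<sigma>)
                                       + \<i> * complex_of_real (- a * (smean n x - \<mu>) / \<sigma>))))
     + (exp (- \<i> * complex_of_real (a * smean n x / ssd n x)) * (ecf n x (a / ssd n x) - psiN \<mu> \<sigma> (a / ssd n x))
        - exp (- \<i> * complex_of_real (a * \<mu> / \<sigma>)) * (ecf n x (a / \<sigma>) - psiN \<mu> \<sigma> (a / \<sigma>)))"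
  unfolding secf_def G0_def by (simp add: algebra_simps flip: add_divide_distrib)

lemma G0_scale:
  "G0 \<mu> \<sigma> (\<lambda>s. complex_of_real c * G s) (c * y1) (c * y2) a = complex_of_real c * G0 \<mu> \<sigma> G y1 y2 a"
  unfolding G0_def by (simp add: algebra_simps)

text \<open>The free parameter \<eta> balances the derivative bound against the Taylor remainder; letting
  first r and then \<eta> tend to zero makes the error o(r).\<close>

lemma secf_expansion_error:
  fixes \<mu> \<sigma> T :: real
  assumes sp: "\<sigma> > 0" and Tp: "T > 0"
  obtains r0 \<eta>0 D E :: real where "r0 > 0" "\<eta>0 > 0" "D \<ge> 0" "E \<ge> 0"
    and "\<And>n x r \<eta> a. n \<ge> 1 \<Longrightarrow> 0 \<le> r \<Longrightarrow> r \<le> r0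
          \<Longrightarrow> \<bar>smean n x - \<mu>\<bar> \<le> r \<Longrightarrow> \<bar>ssd n x - \<sigma>\<bar> \<le> r
          \<Longrightarrow> (\<And>s. \<bar>s\<bar> \<le> T / \<sigma> \<Longrightarrow> cmod (ecf n x s - psiN \<mu> \<sigma> s) \<le> r)
          \<Longrightarrow> 0 < \<eta> \<Longrightarrow> \<eta> \<le> \<eta>0 \<Longrightarrow> \<bar>a\<bar> \<le> T
          \<Longrightarrow> cmod (secf n x a - complex_of_real (psi0 a)
                 - G0 \<mu> \<sigma> (\<lambda>s. ecf n x s - psiN \<mu> \<sigma> s) (smean n x - \<mu>) (ssd n x - \<sigma>) a)
              \<le> D * r^2 / \<eta> + E * r * \<eta>"
proof -
  define \<tau> where "\<tau> = T / \<sigma>"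
  define K where "K = \<bar>\<mu>\<bar> + \<sigma>^2 * \<tau> + \<sigma>^2"
  define d0 where "d0 = min 1 (1 / K)"
  define B where "B = ((3 * \<sigma> / 2)^2 + (\<bar>\<mu>\<bar> + \<sigma> / 2)^2) / 2 + K^2 + \<sigma>^2 / 2"
  define c where "c = 2 * T / \<sigma>^2"
  define c' where "c' = 2 * T * (\<sigma> + \<bar>\<mu>\<bar>) / \<sigma>^2"
  define C1 where "C1 = 2 * T / \<sigma> + 5 * T^2 / \<sigma>"
  define C2 where "C2 = 2 * T / \<sigma>^2 + 8 * T^2 / \<sigma>^2"
  have pos: "\<tau> > 0" "c > 0" "C1 > 0"
    unfolding \<tau>_def c_def C1_def using sp Tp by (auto intro: add_pos_pos)
  then have "K > 0"
    unfolding K_def using sp by (simp add: add_nonneg_pos)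
  then have "d0 > 0"
    unfolding d0_def by simp
  have nonneg: "B \<ge> 0" "c' \<ge> 0" "C2 \<ge> 0"
    unfolding B_def c'_def C2_def using sp Tp by auto
  show ?thesis
  proof (rule that[of "min (\<sigma> / 2) (min (1 / C1) (d0 / c))" "min (min \<tau> d0) 1"
                   "C1^2 + C2 + 2 * c + B * c^2 + c'" "c * B"])
    fix n x r \<eta> a
    assume n1: "n \<ge> 1" and rp: "0 \<le> r" and r0: "r \<le> min (\<sigma> / 2) (min (1 / C1) (d0 / c))"
      and xb: "\<bar>smean n x - \<mu>\<bar> \<le> r" and Sb: "\<bar>ssd n x - \<sigma>\<bar> \<le> r"
      and hb: "\<And>s. \<bar>s\<bar> \<le> T / \<sigma> \<Longrightarrow> cmod (ecf n x s - psiN \<mu> \<sigma> s) \<le> r"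
      and eta: "0 < \<eta>" "\<eta> \<le> min (min \<tau> d0) 1" and ab: "\<bar>a\<bar> \<le> T"
    have rs: "r \<le> \<sigma> / 2" and C1r: "C1 * r \<le> 1" and crd: "c * r \<le> d0"
      using r0 pos \<open>d0 > 0\<close> by (auto simp: field_simps)
    have part1: "cmod (exp (- \<i> * complex_of_real (a * smean n x / ssd n x)) * psiN \<mu> \<sigma> (a / ssd n x)
           - complex_of_real (psi0 a) * (1 + (complex_of_real (a^2 * (ssd n x - \<sigma>) / \<sigma>)
                                          + \<i> * complex_of_real (- a * (smean n x - \<mu>) / \<sigma>))))
         \<le> (C1^2 + C2) * r^2"
      using norm_standardized_psiN_sub_linear_le[OF sp _ rp xb Sb rs ab] Tp C1r
      unfolding C1_def C2_def by simp
    have part2: "cmod (exp (- \<i> * complex_of_real (a * smean n x / ssd n x)) * (ecf n x (a / ssd n x) - psiN \<mu> \<sigma> (a / ssd n x))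
           - exp (- \<i> * complex_of_real (a * \<mu> / \<sigma>)) * (ecf n x (a / \<sigma>) - psiN \<mu> \<sigma> (a / \<sigma>)))
         \<le> c * r * (2 * r / \<eta> + B * \<eta>) + B * (c * r)^2 + c' * r * r"
      using norm_rescaled_ecf_dev_diff_le[OF n1 sp Tp rp xb Sb rs ab, of \<eta>] hb eta crd
      unfolding \<tau>_def K_def d0_def B_def c_def c'_def by simp
    have "r^2 \<le> r^2 / \<eta>"
      using eta mult_right_le_one_le[of "r^2" \<eta>] by (simp add: field_simps)
    then have "(C1^2 + C2 + B * c^2 + c') * r^2 \<le> (C1^2 + C2 + B * c^2 + c') * (r^2 / \<eta>)"
      using nonneg by (intro mult_left_mono) auto
    then have "(C1^2 + C2) * r^2 + (c * r * (2 * r / \<eta> + B * \<eta>) + B * (c * r)^2 + c' * r * r)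
        \<le> (C1^2 + C2 + 2 * c + B * c^2 + c') * r^2 / \<eta> + c * B * r * \<eta>"
    proof -
      have "c * r * (2 * r / \<eta> + B * \<eta>) + B * (c * r)^2 + c' * r * r
          = 2 * c * r^2 / \<eta> + c * B * r * \<eta> + (B * c^2 + c') * r^2"
        using eta(1) by (simp add: field_simps power2_eq_square)
      moreover have "(C1^2 + C2 + 2 * c + B * c^2 + c') * r^2 / \<eta>
          = (C1^2 + C2 + B * c^2 + c') * (r^2 / \<eta>) + 2 * c * r^2 / \<eta>"
        using eta(1) by (simp add: field_simps)
      ultimately show ?thesis
        using \<open>(C1^2 + C2 + B * c^2 + c') * r^2 \<le> (C1^2 + C2 + B * c^2 + c') * (r^2 / \<eta>)\<close>
        by (simp add: algebra_simps)
    qed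
    then show "cmod (secf n x a - complex_of_real (psi0 a)
                 - G0 \<mu> \<sigma> (\<lambda>s. ecf n x s - psiN \<mu> \<sigma> s) (smean n x - \<mu>) (ssd n x - \<sigma>) a)
              \<le> (C1^2 + C2 + 2 * c + B * c^2 + c') * r^2 / \<eta> + c * B * r * \<eta>"
      unfolding secf_sub_G0_eq using norm_triangle_ineq part1 part2 by (smt (verit))
  qed (use pos nonneg \<open>d0 > 0\<close> sp in auto)
qed

lemma continuous_on_ecf: "continuous_on UNIV (ecf n x)"
  unfolding ecf_def divide_inverse by (intro continuous_intros)

lemma continuous_on_secf: "continuous_on UNIV (secf n x)"
  unfolding secf_def divide_inverse by (intro continuous_intros continuous_on_compose2[OF continuous_on_ecf]) auto

lemma continuous_on_Dm: "continuous_on UNIV (Dm m n x)"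
  unfolding Dm_def Sm_def divide_inverse by (intro continuous_intros continuous_on_compose2[OF continuous_on_secf]) auto

lemma continuous_on_psi0: "continuous_on UNIV psi0"
  unfolding psi0_def by (intro continuous_intros) auto

lemma continuous_on_psiN: "continuous_on UNIV (psiN \<mu> \<sigma>)"
  unfolding psiN_def by (intro continuous_intros) auto

lemma continuous_on_G0:
  assumes "continuous_on UNIV G"
  shows "continuous_on UNIV (G0 \<mu> \<sigma> G y1 y2)"
  unfolding G0_def divide_inverse
  by (intro continuous_intros continuous_on_compose2[OF assms] continuous_on_compose2[OF continuous_on_psi0]) auto

lemma continuous_on_Hm:
  assumes "continuous_on UNIV G" "m \<ge> 1"
  shows "continuous_on UNIV (Hm \<mu> \<sigma> G y1 y2 m)"
  unfolding Hm_def using assms(2)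
  by (intro continuous_intros continuous_on_compose2[OF continuous_on_G0[OF assms(1)]] continuous_on_compose2[OF continuous_on_psi0])
     (auto simp: psi0_def)

lemma continuous_on_smean: "continuous_on UNIV (smean n :: (nat \<Rightarrow> real) \<Rightarrow> real)"
  unfolding smean_def divide_inverse by (intro continuous_intros continuous_on_product_coordinates)

lemma continuous_on_ssd: "continuous_on UNIV (ssd n :: (nat \<Rightarrow> real) \<Rightarrow> real)"
  unfolding ssd_def divide_inverse by (intro continuous_intros continuous_on_product_coordinates continuous_on_smean)

lemma measurable_Deltam_integrand:
  fixes X :: "nat \<Rightarrow> 'a \<Rightarrow> real" and w :: "real \<Rightarrow> real"
  assumes [measurable]: "\<And>k. X k \<in> borel_measurable P" and [measurable]: "w \<in> borel_measurable borel"
  shows "(\<lambda>(\<omega>, t). w t * (cmod (Dm m n (\<lambda>k. X k \<omega>) t))^2) \<in> borel_measurable (P \<Otimes>\<^sub>M lborel)"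
  unfolding Dm_def Sm_def secf_def ecf_def smean_def ssd_def
  by measurable

lemma borel_measurable_integral_param:
  fixes F :: "'a \<Rightarrow> real \<Rightarrow> real"
  assumes meas: "(\<lambda>(\<omega>, t). F \<omega> t) \<in> borel_measurable (P \<Otimes>\<^sub>M lborel)"
    and cont: "\<And>\<omega>. continuous_on {a..b} (F \<omega>)"
  shows "(\<lambda>\<omega>. integral {a..b} (F \<omega>)) \<in> borel_measurable P"
proof -
  have eq: "integral {a..b} (F \<omega>) = (\<integral>t. indicator {a..b} t *\<^sub>R F \<omega> t \<partial>lborel)" for \<omega>
    using set_borel_integral_eq_integral(2)[OF borel_integrable_atLeastAtMost'[OF cont[of \<omega>]]]
    unfolding set_lebesgue_integral_def by simp
  have m2: "(\<lambda>(\<omega>, t). indicator {a..b} t *\<^sub>R F \<omega> t) \<in> borel_measurable (P \<Otimes>\<^sub>M lborel)"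
    using meas by measurable
  have "(\<lambda>\<omega>. \<integral>t. indicator {a..b} t *\<^sub>R F \<omega> t \<partial>lborel) \<in> borel_measurable P"
    by (rule lborel.borel_measurable_lebesgue_integral) (use m2 in simp)
  then show ?thesis unfolding eq .
qed

lemma borel_measurable_Deltam:
  fixes X :: "nat \<Rightarrow> 'a \<Rightarrow> real" and w :: "real \<Rightarrow> real"
  assumes [measurable]: "\<And>k. X k \<in> borel_measurable P" and wc: "continuous_on UNIV w"
  shows "(\<lambda>\<omega>. Deltam w T m n (\<lambda>k. X k \<omega>)) \<in> borel_measurable P"
  unfolding Deltam_def
proof (rule borel_measurable_integral_param)
  have [measurable]: "w \<in> borel_measurable borel" using wc by (rule borel_measurable_continuous_onI)
  show "(\<lambda>(\<omega>, t). w t * (cmod (Dm m n (\<lambda>k. X k \<omega>) t))\<^sup>2) \<in> borel_measurable (P \<Otimes>\<^sub>M lborel)"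
    by (rule measurable_Deltam_integrand) measurable
  fix \<omega>
  show "continuous_on {- T..T} (\<lambda>t. w t * (cmod (Dm m n (\<lambda>k. X k \<omega>) t))\<^sup>2)"
    by (intro continuous_intros continuous_on_compose2[OF continuous_on_Dm] continuous_on_subset[OF wc]) auto
qed

section \<open>Expansion of n * Delta_m on bounded fluctuations\<close>

definition ecf_fluct :: "real \<Rightarrow> real \<Rightarrow> nat \<Rightarrow> (nat \<Rightarrow> real) \<Rightarrow> real \<Rightarrow> complex" where
  "ecf_fluct \<mu> \<sigma> n x s = complex_of_real (sqrt (real n)) * (ecf n x s - psiN \<mu> \<sigma> s)"

definition mean_fluct :: "real \<Rightarrow> nat \<Rightarrow> (nat \<Rightarrow> real) \<Rightarrow> real" where
  "mean_fluct \<mu> n x = sqrt (real n) * (smean n x - \<mu>)"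

definition sd_fluct :: "real \<Rightarrow> nat \<Rightarrow> (nat \<Rightarrow> real) \<Rightarrow> real" where
  "sd_fluct \<sigma> n x = sqrt (real n) * (ssd n x - \<sigma>)"

definition fluct_bounded :: "real \<Rightarrow> real \<Rightarrow> real \<Rightarrow> real \<Rightarrow> nat \<Rightarrow> (nat \<Rightarrow> real) \<Rightarrow> bool" where
  "fluct_bounded \<mu> \<sigma> T R n x \<longleftrightarrow> \<bar>mean_fluct \<mu> n x\<bar> \<le> R \<and> \<bar>sd_fluct \<sigma> n x\<bar> \<le> R
     \<and> (\<forall>s. \<bar>s\<bar> \<le> T / \<sigma> \<longrightarrow> cmod (ecf_fluct \<mu> \<sigma> n x s) \<le> R)"

lemma continuous_on_ecf_fluct: "continuous_on UNIV (ecf_fluct \<mu> \<sigma> n x)"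
  unfolding ecf_fluct_def by (intro continuous_intros continuous_on_compose2[OF continuous_on_ecf]
      continuous_on_compose2[OF continuous_on_psiN]) auto

lemma fluct_boundedD:
  assumes "fluct_bounded \<mu> \<sigma> T R n x" "n \<ge> 1"
  shows "\<bar>smean n x - \<mu>\<bar> \<le> R / sqrt (real n)" "\<bar>ssd n x - \<sigma>\<bar> \<le> R / sqrt (real n)"
    and "\<And>s. \<bar>s\<bar> \<le> T / \<sigma> \<Longrightarrow> cmod (ecf n x s - psiN \<mu> \<sigma> s) \<le> R / sqrt (real n)"
  using assms
  by (auto simp: fluct_bounded_def mean_fluct_def sd_fluct_def ecf_fluct_def
      abs_mult norm_mult le_divide_eq mult.commute)

lemma secf_expansion:
  assumes sp: "\<sigma> > 0" and Tp: "T > 0" and Rp: "R > 0" and ep: "\<epsilon> > 0"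
  shows "\<forall>\<^sub>F n in sequentially. \<forall>x. fluct_bounded \<mu> \<sigma> T R n x \<longrightarrow> (\<forall>a. \<bar>a\<bar> \<le> T \<longrightarrow>
           cmod (secf n x a - complex_of_real (psi0 a)
                 - G0 \<mu> \<sigma> (ecf_fluct \<mu> \<sigma> n x) (mean_fluct \<mu> n x) (sd_fluct \<sigma> n x) a / sqrt (real n))
           \<le> \<epsilon> / sqrt (real n))"
proof -
  obtain r0 \<eta>0 D E where r0: "r0 > 0" and \<eta>0: "\<eta>0 > 0" and DE: "D \<ge> 0" "E \<ge> 0" and err:
    "\<And>n x r \<eta> a. n \<ge> 1 \<Longrightarrow> 0 \<le> r \<Longrightarrow> r \<le> r0
       \<Longrightarrow> \<bar>smean n x - \<mu>\<bar> \<le> r \<Longrightarrow> \<bar>ssd n x - \<sigma>\<bar> \<le> r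
       \<Longrightarrow> (\<And>s. \<bar>s\<bar> \<le> T / \<sigma> \<Longrightarrow> cmod (ecf n x s - psiN \<mu> \<sigma> s) \<le> r)
       \<Longrightarrow> 0 < \<eta> \<Longrightarrow> \<eta> \<le> \<eta>0 \<Longrightarrow> \<bar>a\<bar> \<le> T
       \<Longrightarrow> cmod (secf n x a - complex_of_real (psi0 a)
              - G0 \<mu> \<sigma> (\<lambda>s. ecf n x s - psiN \<mu> \<sigma> s) (smean n x - \<mu>) (ssd n x - \<sigma>) a)
           \<le> D * r^2 / \<eta> + E * r * \<eta>"
    using secf_expansion_error[OF sp Tp] by blast
  define q1 q2 where "q1 = E * R + 1" and "q2 = D * R + 1"
  have q: "q1 > 0" "q2 > 0" "E * R \<le> q1" "D * R \<le> q2"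
    unfolding q1_def q2_def using DE Rp by (auto simp: add_nonneg_pos)
  define \<eta> where "\<eta> = min \<eta>0 (\<epsilon> / (2 * q1))"
  have \<eta>: "0 < \<eta>" "\<eta> \<le> \<eta>0" "E * R * \<eta> \<le> \<epsilon> / 2"
  proof -
    have "E * R * \<eta> \<le> q1 * (\<epsilon> / (2 * q1))"
      unfolding \<eta>_def using q DE Rp ep \<eta>0 by (intro mult_mono) auto
    then show "E * R * \<eta> \<le> \<epsilon> / 2"
      using q by simp
  qed (use \<eta>0 ep q in \<open>auto simp: \<eta>_def\<close>)
  define \<delta> where "\<delta> = min r0 (\<epsilon> * \<eta> / (2 * q2))"
  have \<delta>: "\<delta> > 0" "\<delta> \<le> r0" "D * R * \<delta> / \<eta> \<le> \<epsilon> / 2"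
  proof -
    have "D * R * \<delta> \<le> q2 * (\<epsilon> * \<eta> / (2 * q2))"
      unfolding \<delta>_def using q DE Rp ep \<eta> r0 by (intro mult_mono) auto
    then show "D * R * \<delta> / \<eta> \<le> \<epsilon> / 2"
      using q \<eta> by (simp add: field_simps)
  qed (use r0 ep q \<eta> in \<open>auto simp: \<delta>_def\<close>)
  show ?thesis
    using eventually_div_sqrt_le[OF \<delta>(1), of R] eventually_ge_at_top[of 1]
  proof eventually_elim
    case (elim n)
    define r where "r = R / sqrt (real n)"
    have r: "0 \<le> r" "r \<le> \<delta>"
      using elim Rp unfolding r_def by auto
    show ?case
    proof (intro allI impI)
      fix x a
      assume b: "fluct_bounded \<mu> \<sigma> T R n x" and ab: "\<bar>a\<bar> \<le> T"
      have "G0 \<mu> \<sigma> (ecf_fluct \<mu> \<sigma> n x) (mean_fluct \<mu> n x) (sd_fluct \<sigma> n x) a / sqrt (real n)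
          = G0 \<mu> \<sigma> (\<lambda>s. ecf n x s - psiN \<mu> \<sigma> s) (smean n x - \<mu>) (ssd n x - \<sigma>) a"
        using elim(2) unfolding ecf_fluct_def mean_fluct_def sd_fluct_def G0_scale by simp
      moreover have "cmod (secf n x a - complex_of_real (psi0 a)
              - G0 \<mu> \<sigma> (\<lambda>s. ecf n x s - psiN \<mu> \<sigma> s) (smean n x - \<mu>) (ssd n x - \<sigma>) a)
           \<le> D * r^2 / \<eta> + E * r * \<eta>"
        using err[OF elim(2) r(1) order_trans[OF r(2) \<delta>(2)] _ _ _ \<eta>(1,2) ab] fluct_boundedD[OF b elim(2)]
        unfolding r_def by blast
      moreover have "D * r^2 / \<eta> + E * r * \<eta> \<le> \<epsilon> / sqrt (real n)"
      proof -
        have "D * R * r / \<eta> \<le> D * R * \<delta> / \<eta>"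
          using r DE Rp \<eta> by (intro divide_right_mono mult_left_mono) auto
        then have "D * R * r / \<eta> + E * R * \<eta> \<le> \<epsilon>"
          using \<delta>(3) \<eta>(3) by linarith
        moreover have "D * r^2 / \<eta> + E * r * \<eta> = (D * R * r / \<eta> + E * R * \<eta>) / sqrt (real n)"
          unfolding add_divide_distrib power2_eq_square by (simp add: r_def mult_ac)
        ultimately show ?thesis
          using elim(2) by (simp add: divide_right_mono)
      qed
      ultimately show "cmod (secf n x a - complex_of_real (psi0 a)
                 - G0 \<mu> \<sigma> (ecf_fluct \<mu> \<sigma> n x) (mean_fluct \<mu> n x) (sd_fluct \<sigma> n x) a / sqrt (real n))
           \<le> \<epsilon> / sqrt (real n)"
        by simp
    qed
  qed
qed

text \<open>The limit of sqrt n (S_k - psi0) / psi0 along bounded fluctuations.\<close>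

definition Sm_lin :: "real \<Rightarrow> real \<Rightarrow> (real \<Rightarrow> complex) \<Rightarrow> real \<Rightarrow> real \<Rightarrow> nat \<Rightarrow> real \<Rightarrow> complex" where
  "Sm_lin \<mu> \<sigma> G y1 y2 k t =
     of_nat k * G0 \<mu> \<sigma> G y1 y2 (t / sqrt (real k)) / complex_of_real (psi0 (t / sqrt (real k)))"

lemma Hm_eq_Sm_lin_diff: "Hm \<mu> \<sigma> G y1 y2 m t = Sm_lin \<mu> \<sigma> G y1 y2 (m + 1) t - Sm_lin \<mu> \<sigma> G y1 y2 m t"
  unfolding Hm_def Sm_lin_def by simp

lemma G0_bound:
  fixes \<sigma> T R a y1 y2 :: real
  assumes sp: "\<sigma> > 0" and Tp: "T \<ge> 0"
    and Gb: "\<And>s. \<bar>s\<bar> \<le> T / \<sigma> \<Longrightarrow> cmod (G s) \<le> R"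
    and y1: "\<bar>y1\<bar> \<le> R" and y2: "\<bar>y2\<bar> \<le> R" and ab: "\<bar>a\<bar> \<le> T"
  shows "cmod (G0 \<mu> \<sigma> G y1 y2 a) \<le> R * (1 + T / \<sigma> + T^2 / \<sigma>)"
proof -
  have "\<bar>a / \<sigma>\<bar> \<le> T / \<sigma>" using ab sp by (simp add: abs_divide divide_right_mono)
  then have g: "cmod (exp (- \<i> * complex_of_real (a * \<mu> / \<sigma>)) * G (a / \<sigma>)) \<le> R"
    using Gb by (simp add: norm_mult)
  have p0: "0 < psi0 a" "psi0 a \<le> 1" by (rule psi0_pos, rule psi0_le_1)
  have h1: "cmod (\<i> * complex_of_real (a / \<sigma> * psi0 a * y1)) \<le> T / \<sigma> * R"
  proof -
    have "cmod (\<i> * complex_of_real (a / \<sigma> * psi0 a * y1)) = \<bar>a\<bar> / \<sigma> * psi0 a * \<bar>y1\<bar>"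
      using sp p0 by (simp only: norm_mult norm_ii norm_of_real) (simp add: abs_mult abs_divide)
    also have "\<dots> \<le> T / \<sigma> * 1 * R" using sp p0 ab y1 by (intro mult_mono divide_right_mono) auto
    finally show ?thesis by simp
  qed
  have h2: "cmod (complex_of_real (a^2 / \<sigma> * psi0 a * y2)) \<le> T^2 / \<sigma> * R"
  proof -
    have "cmod (complex_of_real (a^2 / \<sigma> * psi0 a * y2)) = a^2 / \<sigma> * psi0 a * \<bar>y2\<bar>"
      using sp p0 by (simp only: norm_of_real) (simp add: abs_mult abs_divide)
    also have "\<dots> \<le> T^2 / \<sigma> * 1 * R"
    proof (intro mult_mono divide_right_mono)
      show "a^2 \<le> T^2" using ab by (metis abs_ge_zero power2_abs power_mono)
    qed (use sp p0 y2 Tp in auto)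
    finally show ?thesis by simp
  qed
  have "cmod (G0 \<mu> \<sigma> G y1 y2 a) \<le> cmod (exp (- \<i> * complex_of_real (a * \<mu> / \<sigma>)) * G (a / \<sigma>))
      + cmod (\<i> * complex_of_real (a / \<sigma> * psi0 a * y1)) + cmod (complex_of_real (a^2 / \<sigma> * psi0 a * y2))"
    unfolding G0_def by (rule order_trans[OF norm_triangle_ineq add_right_mono[OF norm_triangle_ineq4]])
  also have "\<dots> \<le> R + T / \<sigma> * R + T^2 / \<sigma> * R" using g h1 h2 by linarith
  finally show ?thesis by (simp add: algebra_simps)
qed

lemma Sm_lin_bound:
  fixes \<sigma> T R t y1 y2 :: real
  assumes sp: "\<sigma> > 0" and Tp: "T \<ge> 0" and k: "k \<ge> 1"
    and Gb: "\<And>s. \<bar>s\<bar> \<le> T / \<sigma> \<Longrightarrow> cmod (G s) \<le> R"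
    and y1: "\<bar>y1\<bar> \<le> R" and y2: "\<bar>y2\<bar> \<le> R" and tb: "\<bar>t\<bar> \<le> T"
  shows "cmod (complex_of_real (psi0 t) * Sm_lin \<mu> \<sigma> G y1 y2 k t) \<le> real k * (R * (1 + T / \<sigma> + T^2 / \<sigma>))"
proof -
  define a where "a = t / sqrt (real k)"
  have g: "cmod (G0 \<mu> \<sigma> G y1 y2 a) \<le> R * (1 + T / \<sigma> + T^2 / \<sigma>)"
    unfolding a_def by (rule G0_bound[OF sp Tp Gb y1 y2 abs_div_sqrt_le[OF k tb]])
  have "psi0 t / psi0 a \<le> 1"
    using psi0_le_psi0_div_sqrt[OF k, of t] psi0_pos[of a] unfolding a_def by simp
  moreover have "cmod (complex_of_real (psi0 t) * Sm_lin \<mu> \<sigma> G y1 y2 k t)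
      = real k * (psi0 t / psi0 a) * cmod (G0 \<mu> \<sigma> G y1 y2 a)"
    unfolding Sm_lin_def a_def[symmetric] using psi0_pos[of t] psi0_pos[of a]
    by (simp add: norm_mult norm_divide)
  moreover have "real k * (psi0 t / psi0 a) * cmod (G0 \<mu> \<sigma> G y1 y2 a) \<le> real k * 1 * (R * (1 + T / \<sigma> + T^2 / \<sigma>))"
    using calculation(1) g psi0_pos[of t] psi0_pos[of a] by (intro mult_mono mult_left_mono) auto
  ultimately show ?thesis
    by simp
qed

lemma Hm_bound:
  fixes \<sigma> T R t y1 y2 :: real
  assumes sp: "\<sigma> > 0" and Tp: "T \<ge> 0" and m: "m \<ge> 1"
    and Gb: "\<And>s. \<bar>s\<bar> \<le> T / \<sigma> \<Longrightarrow> cmod (G s) \<le> R"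
    and y1: "\<bar>y1\<bar> \<le> R" and y2: "\<bar>y2\<bar> \<le> R" and tb: "\<bar>t\<bar> \<le> T"
  shows "cmod (complex_of_real (psi0 t) * Hm \<mu> \<sigma> G y1 y2 m t) \<le> real (2 * m + 1) * (R * (1 + T / \<sigma> + T^2 / \<sigma>))"
proof -
  have "cmod (complex_of_real (psi0 t) * Hm \<mu> \<sigma> G y1 y2 m t)
      \<le> cmod (complex_of_real (psi0 t) * Sm_lin \<mu> \<sigma> G y1 y2 (m + 1) t)
        + cmod (complex_of_real (psi0 t) * Sm_lin \<mu> \<sigma> G y1 y2 m t)"
    unfolding Hm_eq_Sm_lin_diff right_diff_distrib by (rule norm_triangle_ineq4)
  also have "\<dots> \<le> real (m + 1) * (R * (1 + T / \<sigma> + T^2 / \<sigma>)) + real m * (R * (1 + T / \<sigma> + T^2 / \<sigma>))"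
    using m by (intro add_mono Sm_lin_bound[OF sp Tp _ Gb y1 y2 tb]) auto
  also have "\<dots> = real (2 * m + 1) * (R * (1 + T / \<sigma> + T^2 / \<sigma>))"
    by (simp only: of_nat_add of_nat_mult of_nat_1 of_nat_numeral distrib_right[symmetric]) simp
  finally show ?thesis .
qed

lemma Sm_expansion:
  assumes sp: "\<sigma> > 0" and Tp: "T > 0" and Rp: "R > 0" and ep: "\<epsilon> > 0" and k: "k \<ge> 1"
  shows "\<forall>\<^sub>F n in sequentially. \<forall>x. fluct_bounded \<mu> \<sigma> T R n x \<longrightarrow> (\<forall>t. \<bar>t\<bar> \<le> T \<longrightarrow>
           cmod (complex_of_real (sqrt (real n)) * (Sm k n x t - complex_of_real (psi0 t))
                 - complex_of_real (psi0 t) * Sm_lin \<mu> \<sigma> (ecf_fluct \<mu> \<sigma> n x) (mean_fluct \<mu> n x) (sd_fluct \<sigma> n x) k t)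
           \<le> \<epsilon>)"
proof -
  define CG where "CG = R * (1 + T / \<sigma> + T^2 / \<sigma>)"
  define e where "e = \<epsilon> / (2 * real k)"
  have e: "e > 0" "real k * e = \<epsilon> / 2"
    unfolding e_def using ep k by auto
  have "\<epsilon> / 2 > 0"
    using ep by simp
  show ?thesis
    using secf_expansion[OF sp Tp Rp e(1), of \<mu>] eventually_div_sqrt_le[OF zero_less_one, of "e + CG"]
      eventually_div_sqrt_le[OF \<open>\<epsilon> / 2 > 0\<close>, of "4^k * (e + CG)^2"] eventually_ge_at_top[of 1]
  proof eventually_elim
    case (elim n)
    show ?case
    proof (intro allI impI)
      fix x t
      assume b: "fluct_bounded \<mu> \<sigma> T R n x" and tb: "\<bar>t\<bar> \<le> T"
      define a where "a = t / sqrt (real k)"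
      define p where "p = complex_of_real (psi0 a)"
      define g where "g = G0 \<mu> \<sigma> (ecf_fluct \<mu> \<sigma> n x) (mean_fluct \<mu> n x) (sd_fluct \<sigma> n x) a"
      have ab: "\<bar>a\<bar> \<le> T"
        unfolding a_def by (rule abs_div_sqrt_le[OF k tb])
      have u: "cmod (secf n x a - p - g / complex_of_real (sqrt (real n))) \<le> e / sqrt (real n)"
        using elim(1) b ab unfolding p_def g_def by simp
      have g: "cmod g \<le> CG"
        unfolding g_def CG_def using b ab sp Tp
        by (intro G0_bound) (auto simp: fluct_bounded_def)
      have p: "cmod p \<le> 1" and "p \<noteq> 0"
        unfolding p_def using psi0_pos[of a] psi0_le_1[of a] by auto
      have pk: "p^k = complex_of_real (psi0 t)"
        unfolding p_def a_def using psi0_div_sqrt_power[OF k, of t] by (simp flip: of_real_power)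
      then have lin: "complex_of_real (psi0 t) * Sm_lin \<mu> \<sigma> (ecf_fluct \<mu> \<sigma> n x) (mean_fluct \<mu> n x) (sd_fluct \<sigma> n x) k t
          = of_nat k * p^(k - 1) * g"
        using k \<open>p \<noteq> 0\<close> unfolding Sm_lin_def a_def[symmetric] p_def[symmetric] g_def[symmetric]
        by (simp add: power_eq_if field_simps)
      have "complex_of_real (sqrt (real n)) * (Sm k n x t - complex_of_real (psi0 t))
            - complex_of_real (psi0 t) * Sm_lin \<mu> \<sigma> (ecf_fluct \<mu> \<sigma> n x) (mean_fluct \<mu> n x) (sd_fluct \<sigma> n x) k t
          = complex_of_real (sqrt (real n)) * (secf n x a ^ k - p^k) - of_nat k * p^(k - 1) * g"
        unfolding lin Sm_def by (simp only: a_def pk)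
      also have "cmod \<dots> \<le> 4^k * (e + CG)^2 / sqrt (real n) + real k * e"
        using elim(2,4) by (intro norm_scaled_power_diff_sub_linear_le[OF _ p u g]) auto
      also have "\<dots> \<le> \<epsilon>"
        using elim(3) e(2) by linarith
      finally show "cmod (complex_of_real (sqrt (real n)) * (Sm k n x t - complex_of_real (psi0 t))
                 - complex_of_real (psi0 t) * Sm_lin \<mu> \<sigma> (ecf_fluct \<mu> \<sigma> n x) (mean_fluct \<mu> n x) (sd_fluct \<sigma> n x) k t)
           \<le> \<epsilon>" .
    qed
  qed
qed

lemma Dm_expansion:
  assumes sp: "\<sigma> > 0" and Tp: "T > 0" and Rp: "R > 0" and ep: "\<epsilon> > 0" and m: "m \<ge> 1"
  shows "\<forall>\<^sub>F n in sequentially. \<forall>x. fluct_bounded \<mu> \<sigma> T R n x \<longrightarrow> (\<forall>t. \<bar>t\<bar> \<le> T \<longrightarrow>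
           cmod (complex_of_real (sqrt (real n)) * Dm m n x t
                 - complex_of_real (psi0 t) * Hm \<mu> \<sigma> (ecf_fluct \<mu> \<sigma> n x) (mean_fluct \<mu> n x) (sd_fluct \<sigma> n x) m t)
           \<le> \<epsilon>)"
proof -
  have e: "\<epsilon> / 2 > 0" and m1: "m + 1 \<ge> 1"
    using ep by simp_all
  show ?thesis
    using Sm_expansion[OF sp Tp Rp e m1, of \<mu>] Sm_expansion[OF sp Tp Rp e m, of \<mu>]
  proof eventually_elim
    case (elim n)
    show ?case
    proof (intro allI impI)
      fix x t
      assume "fluct_bounded \<mu> \<sigma> T R n x" "\<bar>t\<bar> \<le> T"
      define L where "L k = Sm_lin \<mu> \<sigma> (ecf_fluct \<mu> \<sigma> n x) (mean_fluct \<mu> n x) (sd_fluct \<sigma> n x) k t" for k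
      define sn p where "sn = complex_of_real (sqrt (real n))" and "p = complex_of_real (psi0 t)"
      have "cmod (sn * (Sm (m + 1) n x t - p) - p * L (m + 1)) \<le> \<epsilon> / 2"
        and "cmod (sn * (Sm m n x t - p) - p * L m) \<le> \<epsilon> / 2"
        using elim \<open>fluct_bounded \<mu> \<sigma> T R n x\<close> \<open>\<bar>t\<bar> \<le> T\<close> unfolding L_def sn_def p_def by auto
      moreover have "sn * Dm m n x t - p * (L (m + 1) - L m)
          = (sn * (Sm (m + 1) n x t - p) - p * L (m + 1)) - (sn * (Sm m n x t - p) - p * L m)"
        unfolding Dm_def by (simp add: algebra_simps)
      then have "cmod (sn * Dm m n x t - p * (L (m + 1) - L m))
          \<le> cmod (sn * (Sm (m + 1) n x t - p) - p * L (m + 1)) + cmod (sn * (Sm m n x t - p) - p * L m)"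
        by (simp only: norm_triangle_ineq4)
      ultimately have "cmod (sn * Dm m n x t - p * (L (m + 1) - L m)) \<le> \<epsilon>"
        by linarith
      then show "cmod (complex_of_real (sqrt (real n)) * Dm m n x t
                 - complex_of_real (psi0 t) * Hm \<mu> \<sigma> (ecf_fluct \<mu> \<sigma> n x) (mean_fluct \<mu> n x) (sd_fluct \<sigma> n x) m t)
           \<le> \<epsilon>"
        unfolding Hm_eq_Sm_lin_diff L_def sn_def p_def .
    qed
  qed
qed

lemma n_Deltam_eq_integral:
  "real n * Deltam w T m n x
     = integral {-T..T} (\<lambda>t. w t * (cmod (complex_of_real (sqrt (real n)) * Dm m n x t))^2)"
  using integral_cmul[where c="real n" and f="\<lambda>t. w t * (cmod (Dm m n x t))^2" and S="{-T..T}"]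
  unfolding Deltam_def norm_mult power_mult_distrib by (simp add: mult_ac)

lemma Qm_eq_integral:
  "Qm w T \<mu> \<sigma> G y1 y2 m
     = integral {-T..T} (\<lambda>t. w t * (cmod (complex_of_real (psi0 t) * Hm \<mu> \<sigma> G y1 y2 m t))^2)"
  unfolding Qm_def norm_mult power_mult_distrib by (simp add: mult_ac)

lemma n_Deltam_approx:
  assumes sp: "\<sigma> > 0" and Tp: "T > 0" and Rp: "R > 0" and ep: "\<epsilon> > 0" and m: "m \<ge> 1"
    and wc: "continuous_on UNIV w" and w: "\<And>t. 0 \<le> w t \<and> w t \<le> 1"
  shows "\<forall>\<^sub>F n in sequentially. \<forall>x. fluct_bounded \<mu> \<sigma> T R n x \<longrightarrow>
           \<bar>real n * Deltam w T m n x - Qm w T \<mu> \<sigma> (ecf_fluct \<mu> \<sigma> n x) (mean_fluct \<mu> n x) (sd_fluct \<sigma> n x) m\<bar>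
           \<le> \<epsilon>"
proof -
  define C where "C = real (2 * m + 1) * (R * (1 + T / \<sigma> + T^2 / \<sigma>))"
  have C: "C \<ge> 0"
    unfolding C_def using Rp Tp sp by simp
  define q where "q = (2 * C + 1) * (2 * T)"
  have q: "q > 0"
    unfolding q_def using C Tp by (simp add: add_nonneg_pos)
  define e where "e = min 1 (\<epsilon> / q)"
  have e: "e > 0" "e \<le> 1"
    using ep q by (auto simp: e_def)
  have "(2 * C + 1) * e * (T - - T) = q * e"
    unfolding q_def by simp
  also have "\<dots> \<le> q * (\<epsilon> / q)"
    using q unfolding e_def by (intro mult_left_mono) auto
  finally have e3: "(2 * C + 1) * e * (T - - T) \<le> \<epsilon>"
    using q by simp
  show ?thesis
    using Dm_expansion[OF sp Tp Rp e(1) m, of \<mu>]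
  proof (rule eventually_mono, intro allI impI)
    fix n x
    assume close: "\<forall>x. fluct_bounded \<mu> \<sigma> T R n x \<longrightarrow> (\<forall>t. \<bar>t\<bar> \<le> T \<longrightarrow>
           cmod (complex_of_real (sqrt (real n)) * Dm m n x t
                 - complex_of_real (psi0 t) * Hm \<mu> \<sigma> (ecf_fluct \<mu> \<sigma> n x) (mean_fluct \<mu> n x) (sd_fluct \<sigma> n x) m t)
           \<le> e)"
      and b: "fluct_bounded \<mu> \<sigma> T R n x"
    have "\<bar>real n * Deltam w T m n x - Qm w T \<mu> \<sigma> (ecf_fluct \<mu> \<sigma> n x) (mean_fluct \<mu> n x) (sd_fluct \<sigma> n x) m\<bar>
        \<le> (2 * C + 1) * e * (T - - T)"
      unfolding n_Deltam_eq_integral Qm_eq_integral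
    proof (rule integral_weighted_norm_sq_diff_le)
      show "continuous_on {-T..T} (\<lambda>t. complex_of_real (sqrt (real n)) * Dm m n x t)"
        by (intro continuous_intros continuous_on_subset[OF continuous_on_Dm]) auto
      show "continuous_on {-T..T} (\<lambda>t. complex_of_real (psi0 t) * Hm \<mu> \<sigma> (ecf_fluct \<mu> \<sigma> n x) (mean_fluct \<mu> n x) (sd_fluct \<sigma> n x) m t)"
        by (intro continuous_intros continuous_on_compose2[OF continuous_on_psi0]
            continuous_on_subset[OF continuous_on_Hm[OF continuous_on_ecf_fluct m]]) auto
      show "cmod (complex_of_real (psi0 t) * Hm \<mu> \<sigma> (ecf_fluct \<mu> \<sigma> n x) (mean_fluct \<mu> n x) (sd_fluct \<sigma> n x) m t) \<le> C"
        if "t \<in> {-T..T}" for t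
        using b that Tp unfolding C_def fluct_bounded_def by (intro Hm_bound[OF sp _ m]) auto
      show "cmod (complex_of_real (sqrt (real n)) * Dm m n x t
              - complex_of_real (psi0 t) * Hm \<mu> \<sigma> (ecf_fluct \<mu> \<sigma> n x) (mean_fluct \<mu> n x) (sd_fluct \<sigma> n x) m t) \<le> e"
        if "t \<in> {-T..T}" for t
        using close b that by auto
      show "continuous_on {-T..T} w"
        using wc by (rule continuous_on_subset) simp
    qed (use Tp w e in auto)
    then show "\<bar>real n * Deltam w T m n x - Qm w T \<mu> \<sigma> (ecf_fluct \<mu> \<sigma> n x) (mean_fluct \<mu> n x) (sd_fluct \<sigma> n x) m\<bar> \<le> \<epsilon>"
      using e3 by linarith
  qed
qed

section \<open>The limit functional on the fluctuation space\<close>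

lemma G0_diff: "G0 \<mu> \<sigma> G y1 y2 t - G0 \<mu> \<sigma> G' y1' y2' t = G0 \<mu> \<sigma> (\<lambda>s. G s - G' s) (y1 - y1') (y2 - y2') t"
  unfolding G0_def right_diff_distrib of_real_diff by (simp add: algebra_simps)

lemma Hm_diff: "Hm \<mu> \<sigma> G y1 y2 m t - Hm \<mu> \<sigma> G' y1' y2' m t = Hm \<mu> \<sigma> (\<lambda>s. G s - G' s) (y1 - y1') (y2 - y2') m t"
proof -
  have "Hm \<mu> \<sigma> (\<lambda>s. G s - G' s) (y1 - y1') (y2 - y2') m t
     = of_nat (m + 1) * (G0 \<mu> \<sigma> G y1 y2 (t / sqrt (real (m + 1))) - G0 \<mu> \<sigma> G' y1' y2' (t / sqrt (real (m + 1)))) / complex_of_real (psi0 (t / sqrt (real (m + 1))))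
     - of_nat m * (G0 \<mu> \<sigma> G y1 y2 (t / sqrt (real m)) - G0 \<mu> \<sigma> G' y1' y2' (t / sqrt (real m))) / complex_of_real (psi0 (t / sqrt (real m)))"
    unfolding Hm_def G0_diff ..
  then show ?thesis unfolding Hm_def by (simp add: diff_divide_distrib right_diff_distrib)
qed

lemma abs_Qm_diff_le:
  fixes \<sigma> T R \<delta> y1 y2 y1' y2' :: real and w :: "real \<Rightarrow> real"
  defines "K \<equiv> 1 + T / \<sigma> + T^2 / \<sigma>"
  assumes sp: "\<sigma> > 0" and Tp: "T > 0" and m: "m \<ge> 1"
    and wc: "continuous_on UNIV w" and w: "\<And>t. 0 \<le> w t \<and> w t \<le> 1"
    and Gc: "continuous_on UNIV G" and G'c: "continuous_on UNIV G'"
    and Gb: "\<And>s. \<bar>s\<bar> \<le> T / \<sigma> \<Longrightarrow> cmod (G s) \<le> R"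
    and Gd: "\<And>s. \<bar>s\<bar> \<le> T / \<sigma> \<Longrightarrow> cmod (G' s - G s) \<le> \<delta>"
    and y: "\<bar>y1\<bar> \<le> R" "\<bar>y2\<bar> \<le> R" and yd: "\<bar>y1' - y1\<bar> \<le> \<delta>" "\<bar>y2' - y2\<bar> \<le> \<delta>"
    and small: "real (2 * m + 1) * (\<delta> * K) \<le> 1"
  shows "\<bar>Qm w T \<mu> \<sigma> G' y1' y2' m - Qm w T \<mu> \<sigma> G y1 y2 m\<bar>
          \<le> (2 * (real (2 * m + 1) * (R * K)) + 1) * (real (2 * m + 1) * (\<delta> * K)) * (T - - T)"
  unfolding Qm_eq_integral
proof (rule integral_weighted_norm_sq_diff_le)
  show "continuous_on {-T..T} (\<lambda>t. complex_of_real (psi0 t) * Hm \<mu> \<sigma> G' y1' y2' m t)"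
    and "continuous_on {-T..T} (\<lambda>t. complex_of_real (psi0 t) * Hm \<mu> \<sigma> G y1 y2 m t)"
    by (intro continuous_intros continuous_on_compose2[OF continuous_on_psi0]
        continuous_on_subset[OF continuous_on_Hm[OF G'c m]] continuous_on_subset[OF continuous_on_Hm[OF Gc m]]; simp)+
  fix t
  assume "t \<in> {-T..T}"
  then have t: "\<bar>t\<bar> \<le> T"
    by auto
  show "cmod (complex_of_real (psi0 t) * Hm \<mu> \<sigma> G y1 y2 m t) \<le> real (2 * m + 1) * (R * K)"
    unfolding K_def using Hm_bound[OF sp _ m Gb y t] Tp by simp
  show "cmod (complex_of_real (psi0 t) * Hm \<mu> \<sigma> G' y1' y2' m t - complex_of_real (psi0 t) * Hm \<mu> \<sigma> G y1 y2 m t)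
      \<le> real (2 * m + 1) * (\<delta> * K)"
    unfolding right_diff_distrib[symmetric] Hm_diff K_def using Hm_bound[OF sp _ m Gd yd t] Tp by simp
qed (use Tp wc w small in \<open>auto intro: continuous_on_subset\<close>)

lemma abs_Qm_le:
  fixes \<sigma> T R y1 y2 :: real and w :: "real \<Rightarrow> real"
  assumes sp: "\<sigma> > 0" and Tp: "T > 0" and m: "m \<ge> 1"
    and wc: "continuous_on UNIV w" and w: "\<And>t. 0 \<le> w t \<and> w t \<le> 1"
    and Gc: "continuous_on UNIV G" and Gb: "\<And>s. \<bar>s\<bar> \<le> T / \<sigma> \<Longrightarrow> cmod (G s) \<le> R"
    and y: "\<bar>y1\<bar> \<le> R" "\<bar>y2\<bar> \<le> R"
  shows "\<bar>Qm w T \<mu> \<sigma> G y1 y2 m\<bar> \<le> (real (2 * m + 1) * (R * (1 + T / \<sigma> + T^2 / \<sigma>)))^2 * (T - - T)"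
  unfolding Qm_eq_integral real_norm_def[symmetric]
proof (rule integral_bound)
  show "continuous_on {-T..T} (\<lambda>t. w t * (cmod (complex_of_real (psi0 t) * Hm \<mu> \<sigma> G y1 y2 m t))^2)"
    by (intro continuous_intros continuous_on_compose2[OF continuous_on_psi0]
        continuous_on_subset[OF continuous_on_Hm[OF Gc m]] continuous_on_subset[OF wc]) auto
  fix t
  assume "t \<in> {-T..T}"
  then have "cmod (complex_of_real (psi0 t) * Hm \<mu> \<sigma> G y1 y2 m t) \<le> real (2 * m + 1) * (R * (1 + T / \<sigma> + T^2 / \<sigma>))"
    using Hm_bound[OF sp _ m Gb y] Tp by auto
  then have "(cmod (complex_of_real (psi0 t) * Hm \<mu> \<sigma> G y1 y2 m t))^2
      \<le> (real (2 * m + 1) * (R * (1 + T / \<sigma> + T^2 / \<sigma>)))^2"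
    by (intro power_mono) auto
  then show "norm (w t * (cmod (complex_of_real (psi0 t) * Hm \<mu> \<sigma> G y1 y2 m t))^2)
      \<le> (real (2 * m + 1) * (R * (1 + T / \<sigma> + T^2 / \<sigma>)))^2"
    using w[of t] mult_left_le_one_le[of "(cmod (complex_of_real (psi0 t) * Hm \<mu> \<sigma> G y1 y2 m t))^2" "w t"]
    by simp
qed (use Tp in simp)

type_synonym fluct_space = "(real \<Rightarrow>\<^sub>C complex) \<times> real \<times> real"

lemma norm_triple:
  fixes a :: "real \<Rightarrow>\<^sub>C complex" and b c :: real
  shows "norm a \<le> norm (a, b, c)" "\<bar>b\<bar> \<le> norm (a, b, c)" "\<bar>c\<bar> \<le> norm (a, b, c)"
proof -
  show "norm a \<le> norm (a, b, c)" by (rule norm_fst_le)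
  have bc: "norm (b, c) \<le> norm (a, b, c)" by (rule norm_snd_le)
  show "\<bar>b\<bar> \<le> norm (a, b, c)" using bc norm_fst_le[of b c] by simp
  show "\<bar>c\<bar> \<le> norm (a, b, c)" using bc norm_snd_le[where x=b and y=c] by simp
qed

lemma continuous_on_Qm_fluct_space:
  fixes \<sigma> T :: real and w :: "real \<Rightarrow> real"
  assumes sp: "\<sigma> > 0" and Tp: "T > 0" and m: "m \<ge> 1"
    and wc: "continuous_on UNIV w" and w: "\<And>t. 0 \<le> w t \<and> w t \<le> 1"
  shows "continuous_on UNIV (\<lambda>z::fluct_space. Qm w T \<mu> \<sigma> (apply_bcontfun (fst z)) (fst (snd z)) (snd (snd z)) m)"
proof -
  define Q where "Q z = Qm w T \<mu> \<sigma> (apply_bcontfun (fst z)) (fst (snd z)) (snd (snd z)) m" for z :: fluct_space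
  define K where "K = 1 + T / \<sigma> + T^2 / \<sigma>"
  have K: "K > 0"
    unfolding K_def using sp Tp by (simp add: add_pos_nonneg)
  have "isCont Q z0" for z0
  proof -
    define D where "D = (2 * (real (2 * m + 1) * ((norm z0 + 1) * K)) + 1) * (real (2 * m + 1) * K) * (T - - T)"
    have r: "min 1 (1 / (real (2 * m + 1) * K)) > 0"
      using K by simp
    have "\<forall>\<^sub>F z in at z0. norm (Q z - Q z0) \<le> D * dist z z0"
      using eventually_at_ball[OF r, of z0 UNIV]
    proof (rule eventually_mono)
      fix z
      assume "z \<in> ball z0 (min 1 (1 / (real (2 * m + 1) * K))) \<and> z \<in> UNIV"
      then have "dist z z0 < 1" "dist z z0 < 1 / (real (2 * m + 1) * K)"
        by (auto simp: dist_commute)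
      moreover have "real (2 * m + 1) * (dist z z0 * K) = dist z z0 * (real (2 * m + 1) * K)"
        by (simp only: ac_simps)
      moreover have "real (2 * m + 1) * K > 0"
        using K by simp
      ultimately have d: "dist z z0 \<le> 1" "real (2 * m + 1) * (dist z z0 * K) \<le> 1"
        by (simp_all only: pos_less_divide_eq less_imp_le)
      obtain g y1 y2 g0 y10 y20 where z: "z = (g, y1, y2)" and z0: "z0 = (g0, y10, y20)"
        by (metis prod.exhaust)
      note nt = norm_triple[where a=g0 and b=y10 and c=y20]
        and dt = norm_triple[where a="g - g0" and b="y1 - y10" and c="y2 - y20"]
      have "\<bar>Q z - Q z0\<bar> \<le> (2 * (real (2 * m + 1) * ((norm z0 + 1) * K)) + 1) * (real (2 * m + 1) * (dist z z0 * K)) * (T - - T)"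
        unfolding Q_def z z0 K_def fst_conv snd_conv
      proof (rule abs_Qm_diff_le[OF sp Tp m wc w continuous_on_apply_bcontfun continuous_on_apply_bcontfun])
        show "cmod (apply_bcontfun g0 s) \<le> norm (g0, y10, y20) + 1" for s
          using norm_bounded[of g0 s] nt by linarith
        show "cmod (apply_bcontfun g s - apply_bcontfun g0 s) \<le> dist (g, y1, y2) (g0, y10, y20)" for s
          using norm_bounded[of "g - g0" s] dt by (simp add: dist_norm)
      qed (use nt dt d z z0 K in \<open>auto simp: dist_norm K_def\<close>)
      then show "norm (Q z - Q z0) \<le> D * dist z z0"
        unfolding D_def by (simp add: algebra_simps)
    qed
    moreover have "((\<lambda>z. D * dist z z0) \<longlongrightarrow> 0) (at z0)"
    proof -
      have "((\<lambda>z. dist z z0) \<longlongrightarrow> dist z0 z0) (at z0)"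
        by (intro tendsto_intros)
      then show ?thesis
        by (simp add: tendsto_mult_right_zero)
    qed
    ultimately have "((\<lambda>z. Q z - Q z0) \<longlongrightarrow> 0) (at z0)"
      by (rule Lim_null_comparison)
    then show ?thesis
      unfolding isCont_def by (simp add: LIM_zero_iff)
  qed
  then show ?thesis
    unfolding Q_def by (intro continuous_at_imp_continuous_on) auto
qed

lemma clamp_bcontfun:
  fixes a :: real
  assumes "continuous_on {-a..a} g" "a \<ge> 0"
  shows "(\<lambda>t. g (max (- a) (min a t))) \<in> bcontfun"
proof -
  have c: "continuous_on UNIV (\<lambda>t. g (max (- a) (min a t)))"
    by (rule continuous_on_compose2[OF assms(1)]) (use assms(2) in \<open>auto intro!: continuous_intros\<close>)
  have "range (\<lambda>t. g (max (- a) (min a t))) \<subseteq> g ` {-a..a}" using assms(2) by auto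
  moreover have "bounded (g ` {-a..a})" by (intro compact_imp_bounded compact_continuous_image assms(1)) auto
  ultimately have "bounded (range (\<lambda>t. g (max (- a) (min a t))))" by (rule bounded_subset[rotated])
  with c show ?thesis unfolding bcontfun_def by simp
qed

lemma clampC_apply:
  fixes a :: real
  assumes "continuous_on {-a..a} g" "a \<ge> 0"
  shows "apply_bcontfun (clampC a g) s = g (max (- a) (min a s))"
  unfolding clampC_def using Bcontfun_inverse[OF clamp_bcontfun[OF assms]] by simp

lemma apply_clampC_eq:
  fixes a :: real
  assumes "continuous_on {-a..a} g" "\<bar>s\<bar> \<le> a"
  shows "apply_bcontfun (clampC a g) s = g s"
proof -
  have "a \<ge> 0" "max (- a) (min a s) = s"
    using assms(2) by auto
  then show ?thesis
    using clampC_apply[OF assms(1)] by simp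
qed

lemma dist_clampC_le:
  fixes a :: real
  assumes "continuous_on {-a..a} g" "continuous_on {-a..a} h" "a \<ge> 0"
    and "\<And>s. \<bar>s\<bar> \<le> a \<Longrightarrow> norm (g s - h s) \<le> e"
  shows "dist (clampC a g) (clampC a h) \<le> e"
proof (rule dist_bound)
  fix s
  have clamp: "\<bar>max (- a) (min a s)\<bar> \<le> a"
    using assms(3) by auto
  show "dist (apply_bcontfun (clampC a g) s) (apply_bcontfun (clampC a h) s) \<le> e"
    using assms(4)[OF clamp] unfolding clampC_apply[OF assms(1,3)] clampC_apply[OF assms(2,3)] dist_norm .
qed

lemma Hm_cong:
  assumes G: "\<And>s. \<bar>s\<bar> \<le> T / \<sigma> \<Longrightarrow> G' s = G s" and m: "m \<ge> 1" and sp: "\<sigma> > 0" and tb: "\<bar>t\<bar> \<le> T"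
  shows "Hm \<mu> \<sigma> G' y1 y2 m t = Hm \<mu> \<sigma> G y1 y2 m t"
proof -
  have k: "G' (t / sqrt (real k) / \<sigma>) = G (t / sqrt (real k) / \<sigma>)" if "k \<ge> 1" for k
  proof (rule G)
    have "\<bar>t / sqrt (real k)\<bar> \<le> T" by (rule abs_div_sqrt_le[OF that tb])
    then have "\<bar>t / sqrt (real k)\<bar> / \<sigma> \<le> T / \<sigma>" using sp by (intro divide_right_mono) auto
    moreover have "\<bar>t / sqrt (real k) / \<sigma>\<bar> = \<bar>t / sqrt (real k)\<bar> / \<sigma>" using sp by (simp only: abs_divide)
    ultimately show "\<bar>t / sqrt (real k) / \<sigma>\<bar> \<le> T / \<sigma>" by linarith
  qed
  show ?thesis unfolding Hm_def G0_def using k[of m] k[of "m + 1"] m by simp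
qed

lemma Qm_cong:
  assumes G: "\<And>s. \<bar>s\<bar> \<le> T / \<sigma> \<Longrightarrow> G' s = G s" and m: "m \<ge> 1" and sp: "\<sigma> > 0"
  shows "Qm w T \<mu> \<sigma> G' y1 y2 m = Qm w T \<mu> \<sigma> G y1 y2 m"
  unfolding Qm_def
  by (rule integral_cong) (use Hm_cong[OF G m sp] in auto)

lemma Qm_clampC:
  assumes "continuous_on {-T / \<sigma>..T / \<sigma>} G" "\<sigma> > 0" "m \<ge> 1"
  shows "Qm w T \<mu> \<sigma> (apply_bcontfun (clampC (T / \<sigma>) G)) y1 y2 m = Qm w T \<mu> \<sigma> G y1 y2 m"
  using assms by (intro Qm_cong apply_clampC_eq) auto

definition Qvec :: "(real \<Rightarrow> real) \<Rightarrow> real \<Rightarrow> real \<Rightarrow> real \<Rightarrow> nat \<Rightarrow> fluct_space \<Rightarrow> nat \<Rightarrow> real" where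
  "Qvec w T \<mu> \<sigma> M z =
     (\<lambda>m. if m \<in> {1..M} then Qm w T \<mu> \<sigma> (apply_bcontfun (fst z)) (fst (snd z)) (snd (snd z)) m else 0)"

lemma Qvec_in_RM: "Qvec w T \<mu> \<sigma> M z \<in> RM M"
  unfolding Qvec_def RM_def by auto

lemma continuous_on_Qvec:
  assumes "\<sigma> > 0" "T > 0" "continuous_on UNIV w" "\<And>t. 0 \<le> w t \<and> w t \<le> 1"
  shows "continuous_on UNIV (Qvec w T \<mu> \<sigma> M)"
  unfolding Qvec_def
proof (intro continuous_on_coordinatewise_then_product)
  show "continuous_on UNIV (\<lambda>z. if m \<in> {1..M}
          then Qm w T \<mu> \<sigma> (apply_bcontfun (fst z)) (fst (snd z)) (snd (snd z)) m else 0)" for m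
    by (cases "m \<in> {1..M}") (auto intro: continuous_on_Qm_fluct_space[OF assms(1,2) _ assms(3,4)])
qed

lemma abs_Qvec_le:
  fixes \<sigma> T R :: real and w :: "real \<Rightarrow> real"
  assumes sp: "\<sigma> > 0" and Tp: "T > 0"
    and wc: "continuous_on UNIV w" and w: "\<And>t. 0 \<le> w t \<and> w t \<le> 1"
    and z: "norm z \<le> R"
  shows "\<bar>Qvec w T \<mu> \<sigma> M z m\<bar> \<le> (real (2 * M + 1) * (R * (1 + T / \<sigma> + T^2 / \<sigma>)))^2 * (T - - T)"
proof (cases "m \<in> {1..M}")
  case True
  obtain g y1 y2 where z_eq: "z = (g, y1, y2)"
    by (metis prod.exhaust)
  note nt = norm_triple[where a=g and b=y1 and c=y2]
  have "R \<ge> 0"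
    using z norm_ge_zero[of z] by linarith
  have "Qvec w T \<mu> \<sigma> M z m = Qm w T \<mu> \<sigma> (apply_bcontfun g) y1 y2 m"
    unfolding Qvec_def z_eq using True by simp
  also have "\<bar>\<dots>\<bar> \<le> (real (2 * m + 1) * (R * (1 + T / \<sigma> + T^2 / \<sigma>)))^2 * (T - - T)"
  proof (rule abs_Qm_le[OF sp Tp _ wc w continuous_on_apply_bcontfun])
    show "cmod (apply_bcontfun g s) \<le> R" for s
      using norm_bounded[of g s] nt z unfolding z_eq by linarith
  qed (use True nt z in \<open>auto simp: z_eq\<close>)
  also have "\<dots> \<le> (real (2 * M + 1) * (R * (1 + T / \<sigma> + T^2 / \<sigma>)))^2 * (T - - T)"
    using True \<open>R \<ge> 0\<close> sp Tp by (intro mult_right_mono power_mono mult_right_mono) auto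
  finally show ?thesis .
qed (use Tp in \<open>auto simp: Qvec_def\<close>)

definition fluct_triple :: "real \<Rightarrow> real \<Rightarrow> real \<Rightarrow> nat \<Rightarrow> (nat \<Rightarrow> real) \<Rightarrow> fluct_space" where
  "fluct_triple \<mu> \<sigma> T n x = (clampC (T / \<sigma>) (ecf_fluct \<mu> \<sigma> n x), mean_fluct \<mu> n x, sd_fluct \<sigma> n x)"

lemma fluct_triple_eq:
  "fluct_triple \<mu> \<sigma> T n x =
     (clampC (T / \<sigma>) (\<lambda>t. complex_of_real (sqrt (real n)) * (ecf n x t - psiN \<mu> \<sigma> t)),
      sqrt (real n) * (smean n x - \<mu>), sqrt (real n) * (ssd n x - \<sigma>))"
  unfolding fluct_triple_def ecf_fluct_def[abs_def] mean_fluct_def sd_fluct_def ..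

lemma fluct_bounded_if_norm_le:
  assumes "norm (fluct_triple \<mu> \<sigma> T n x) \<le> R"
  shows "fluct_bounded \<mu> \<sigma> T R n x"
  unfolding fluct_bounded_def
proof (intro conjI allI impI)
  note nt = norm_triple[where a="clampC (T / \<sigma>) (ecf_fluct \<mu> \<sigma> n x)" and b="mean_fluct \<mu> n x" and c="sd_fluct \<sigma> n x"]
  show "\<bar>mean_fluct \<mu> n x\<bar> \<le> R" "\<bar>sd_fluct \<sigma> n x\<bar> \<le> R"
    using nt assms unfolding fluct_triple_def by linarith+
  fix s :: real
  assume "\<bar>s\<bar> \<le> T / \<sigma>"
  then have "ecf_fluct \<mu> \<sigma> n x s = apply_bcontfun (clampC (T / \<sigma>) (ecf_fluct \<mu> \<sigma> n x)) s"
    by (intro apply_clampC_eq[symmetric] continuous_on_subset[OF continuous_on_ecf_fluct]) auto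
  then have "cmod (ecf_fluct \<mu> \<sigma> n x s) \<le> norm (clampC (T / \<sigma>) (ecf_fluct \<mu> \<sigma> n x))"
    using norm_bounded by metis
  then show "cmod (ecf_fluct \<mu> \<sigma> n x s) \<le> R"
    using nt assms unfolding fluct_triple_def by linarith
qed

lemma Qvec_fluct_triple:
  assumes "m \<in> {1..M}" "\<sigma> > 0"
  shows "Qvec w T \<mu> \<sigma> M (fluct_triple \<mu> \<sigma> T n x) m
     = Qm w T \<mu> \<sigma> (ecf_fluct \<mu> \<sigma> n x) (mean_fluct \<mu> n x) (sd_fluct \<sigma> n x) m"
proof -
  have "Qm w T \<mu> \<sigma> (apply_bcontfun (clampC (T / \<sigma>) (ecf_fluct \<mu> \<sigma> n x))) (mean_fluct \<mu> n x) (sd_fluct \<sigma> n x) m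
      = Qm w T \<mu> \<sigma> (ecf_fluct \<mu> \<sigma> n x) (mean_fluct \<mu> n x) (sd_fluct \<sigma> n x) m"
    using assms by (intro Qm_clampC continuous_on_subset[OF continuous_on_ecf_fluct]) auto
  then show ?thesis
    using assms(1) unfolding Qvec_def fluct_triple_def by simp
qed

lemma continuous_on_clampC_ecf_fluct:
  assumes "a \<ge> 0"
  shows "continuous_on UNIV (\<lambda>x. clampC a (ecf_fluct \<mu> \<sigma> n x))"
proof -
  have "isCont (\<lambda>x. clampC a (ecf_fluct \<mu> \<sigma> n x)) x0" for x0
  proof -
    define c where "c = sqrt (real n) * a / real n"
    define \<phi> where "\<phi> x = c * (\<Sum>k=1..n. \<bar>x k - x0 k\<bar>)" for x :: "nat \<Rightarrow> real"
    have "dist (clampC a (ecf_fluct \<mu> \<sigma> n x)) (clampC a (ecf_fluct \<mu> \<sigma> n x0)) \<le> \<phi> x" for x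
    proof (rule dist_clampC_le[OF continuous_on_subset[OF continuous_on_ecf_fluct]
          continuous_on_subset[OF continuous_on_ecf_fluct] assms])
      fix s :: real
      assume "\<bar>s\<bar> \<le> a"
      then have ecf_le: "cmod (ecf n x s - ecf n x0 s) \<le> a * (\<Sum>k=1..n. \<bar>x k - x0 k\<bar>) / real n"
      proof -
        have "\<bar>s\<bar> * (\<Sum>k=1..n. \<bar>x k - x0 k\<bar>) / real n \<le> a * (\<Sum>k=1..n. \<bar>x k - x0 k\<bar>) / real n"
          using \<open>\<bar>s\<bar> \<le> a\<close> by (intro divide_right_mono mult_right_mono sum_nonneg) auto
        then show ?thesis
          using norm_ecf_diff_le[of n x s x0] by linarith
      qed
      have "cmod (ecf_fluct \<mu> \<sigma> n x s - ecf_fluct \<mu> \<sigma> n x0 s) = sqrt (real n) * cmod (ecf n x s - ecf n x0 s)"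
        unfolding ecf_fluct_def by (simp add: norm_mult right_diff_distrib[symmetric])
      then show "cmod (ecf_fluct \<mu> \<sigma> n x s - ecf_fluct \<mu> \<sigma> n x0 s) \<le> \<phi> x"
        unfolding \<phi>_def c_def using mult_left_mono[OF ecf_le, of "sqrt (real n)"] by simp
    qed auto
    then have "\<forall>\<^sub>F x in at x0. norm (dist (clampC a (ecf_fluct \<mu> \<sigma> n x)) (clampC a (ecf_fluct \<mu> \<sigma> n x0))) \<le> \<phi> x"
      by (intro always_eventually allI) simp
    moreover have "(\<phi> \<longlongrightarrow> 0) (at x0)"
    proof -
      have "continuous_on UNIV \<phi>"
        unfolding \<phi>_def by (intro continuous_intros continuous_on_product_coordinates)
      then have "isCont \<phi> x0"
        by (rule continuous_on_interior) simp
      then show ?thesis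
        unfolding isCont_def by (simp add: \<phi>_def)
    qed
    ultimately have "((\<lambda>x. dist (clampC a (ecf_fluct \<mu> \<sigma> n x)) (clampC a (ecf_fluct \<mu> \<sigma> n x0))) \<longlongrightarrow> 0) (at x0)"
      by (rule Lim_null_comparison)
    then show ?thesis
      unfolding isCont_def by (rule tendsto_dist_iff[THEN iffD2])
  qed
  then show ?thesis
    by (intro continuous_at_imp_continuous_on) auto
qed

lemma continuous_on_fluct_triple:
  assumes "\<sigma> > 0" "T > 0"
  shows "continuous_on UNIV (fluct_triple \<mu> \<sigma> T n)"
  unfolding fluct_triple_def mean_fluct_def sd_fluct_def using assms
  by (intro continuous_intros continuous_on_clampC_ecf_fluct continuous_on_smean continuous_on_ssd) auto

section \<open>Converging together in distribution\<close>

lemma compact_RM_box: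
  assumes "L \<ge> 0"
  shows "compact {a. a \<in> RM M \<and> (\<forall>m. \<bar>a m\<bar> \<le> L)}"
proof -
  define S where "S m = (if m \<in> {1..M} then {-L..L} else {0::real})" for m :: nat
  have "a \<in> RM M \<and> (\<forall>m. \<bar>a m\<bar> \<le> L) \<longleftrightarrow> (\<forall>m. a m \<in> S m)" for a
  proof
    assume a: "a \<in> RM M \<and> (\<forall>m. \<bar>a m\<bar> \<le> L)"
    show "\<forall>m. a m \<in> S m"
    proof
      fix m
      show "a m \<in> S m"
        using a[THEN conjunct2, rule_format, of m] a[THEN conjunct1]
        unfolding S_def RM_def by (simp add: abs_le_iff)
    qed
  next
    assume a: "\<forall>m. a m \<in> S m"
    have "\<bar>a m\<bar> \<le> L" for m
      using a[rule_format, of m] assms by (cases "m \<in> {1..M}") (auto simp: S_def abs_le_iff)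
    moreover have "a \<in> RM M"
    proof -
      have "a k = 0" if "k \<notin> {1..M}" for k
        using a[rule_format, of k] unfolding S_def if_not_P[OF that] by simp
      then show ?thesis
        unfolding RM_def by blast
    qed
    ultimately show "a \<in> RM M \<and> (\<forall>m. \<bar>a m\<bar> \<le> L)"
      by blast
  qed
  then have "{a. a \<in> RM M \<and> (\<forall>m. \<bar>a m\<bar> \<le> L)} = Pi\<^sub>E UNIV S"
    by (auto simp: PiE_UNIV_domain Pi_iff)
  moreover have "compactin (product_topology (\<lambda>i. euclidean) UNIV) (Pi\<^sub>E UNIV S)"
    unfolding compactin_PiE S_def by auto
  ultimately show ?thesis
    unfolding euclidean_product_topology by simp
qed

lemma uniformly_continuous_on_RM_box:
  fixes f :: "(nat \<Rightarrow> real) \<Rightarrow> real"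
  assumes fc: "continuous_on (RM M) f" and L: "L \<ge> 0" and e: "e > 0"
  obtains \<theta> where "\<theta> > 0"
    and "\<And>a b. a \<in> RM M \<Longrightarrow> b \<in> RM M \<Longrightarrow> (\<forall>m. \<bar>b m\<bar> \<le> L) \<Longrightarrow> (\<forall>m. \<bar>a m - b m\<bar> \<le> \<theta>)
           \<Longrightarrow> \<bar>f a - f b\<bar> < e"
proof -
  define K where "K = {a. a \<in> RM M \<and> (\<forall>m. \<bar>a m\<bar> \<le> L + 1)}"
  have "uniformly_continuous_on K f"
    using compact_RM_box[of "L + 1" M] L continuous_on_subset[OF fc]
    by (intro compact_uniformly_continuous) (auto simp: K_def)
  then obtain d where d: "d > 0" and fd: "\<And>a b. a \<in> K \<Longrightarrow> b \<in> K \<Longrightarrow> dist b a < d \<Longrightarrow> dist (f b) (f a) < e"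
    unfolding uniformly_continuous_on_def using e by metis
  obtain N where N: "(1/2::real)^N < d / 2"
    using real_arch_pow_inv[of "d / 2" "1/2"] d by auto
  show ?thesis
  proof (rule that[of "min 1 (d / 8)"])
    fix a b
    assume a: "a \<in> RM M" and b: "b \<in> RM M" and bL: "\<forall>m. \<bar>b m\<bar> \<le> L"
      and ab: "\<forall>m. \<bar>a m - b m\<bar> \<le> min 1 (d / 8)"
    have "\<bar>a m\<bar> \<le> L + 1" "\<bar>b m\<bar> \<le> L + 1" for m
      using ab[rule_format, of m] bL[rule_format, of m] by linarith+
    then have "a \<in> K" "b \<in> K"
      using a b unfolding K_def by auto
    moreover have "Max {dist (a (from_nat n)) (b (from_nat n)) |n. n \<le> N} \<le> d / 8"
      using ab by (intro Max.boundedI) (auto simp: dist_real_def)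
    then have "dist a b < d"
      using dist_fun_le_dist_first_terms[of a b N] N d by linarith
    ultimately show "\<bar>f a - f b\<bar> < e"
      using fd by (simp add: dist_real_def dist_commute)
  qed (use d in simp)
qed

text \<open>A continuous substitute for the indicator of {z. norm z > R}: it carries tightness of the
  limit through weak convergence.\<close>

definition tail_cutoff :: "real \<Rightarrow> 'v::real_normed_vector \<Rightarrow> real" where
  "tail_cutoff R z = min 1 (max 0 (norm z - R))"

lemma continuous_on_tail_cutoff: "continuous_on UNIV (tail_cutoff R)"
  unfolding tail_cutoff_def by (intro continuous_intros)

lemma tail_cutoff_bounds: "0 \<le> tail_cutoff R z" "tail_cutoff R z \<le> 1"
  unfolding tail_cutoff_def by auto

lemma bounded_range_tail_cutoff: "bounded (range (tail_cutoff R))"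
  using tail_cutoff_bounds unfolding bounded_real by (metis abs_of_nonneg rangeE)

lemma (in prob_space) tail_cutoff_integral_small:
  fixes W :: "'a \<Rightarrow> 'v::real_normed_vector"
  assumes W: "W \<in> borel_measurable M" and e: "e > 0"
  obtains R where "R \<ge> 0" "(\<integral>\<omega>. tail_cutoff R (W \<omega>) \<partial>M) < e"
proof -
  have "(\<lambda>j. \<integral>\<omega>. tail_cutoff (real j) (W \<omega>) \<partial>M) \<longlonglongrightarrow> (\<integral>\<omega>. 0 \<partial>M)"
  proof (rule integral_dominated_convergence[where w="\<lambda>_. 1"])
    show "(\<lambda>\<omega>. tail_cutoff (real j) (W \<omega>)) \<in> borel_measurable M" for j
      by (rule borel_measurable_continuous_on[OF continuous_on_tail_cutoff W])
    show "AE \<omega> in M. norm (tail_cutoff (real j) (W \<omega>)) \<le> 1" for j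
      by (intro always_eventually allI) (simp add: abs_of_nonneg tail_cutoff_bounds)
    show "AE \<omega> in M. (\<lambda>j. tail_cutoff (real j) (W \<omega>)) \<longlonglongrightarrow> 0"
    proof (intro always_eventually allI)
      fix \<omega>
      have "\<forall>\<^sub>F j in sequentially. tail_cutoff (real j) (W \<omega>) = 0"
        using eventually_ge_at_top[of "nat \<lceil>norm (W \<omega>)\<rceil>"]
        by eventually_elim (auto simp: tail_cutoff_def dest!: nat_ceiling_le_eq[THEN iffD1])
      then show "(\<lambda>j. tail_cutoff (real j) (W \<omega>)) \<longlonglongrightarrow> 0"
        by (rule tendsto_eventually)
    qed
  qed auto
  then have "\<forall>\<^sub>F j in sequentially. (\<integral>\<omega>. tail_cutoff (real j) (W \<omega>) \<partial>M) < e"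
    using e by (auto intro: order_tendstoD(2))
  then obtain j where "(\<integral>\<omega>. tail_cutoff (real j) (W \<omega>) \<partial>M) < e"
    unfolding eventually_sequentially by (meson order_refl)
  then show ?thesis
    using that[of "real j"] by simp
qed

lemma (in prob_space) abs_integral_diff_le:
  fixes u v g :: "'a \<Rightarrow> real"
  assumes "integrable M u" "integrable M v" "integrable M g"
    and "\<And>\<omega>. \<omega> \<in> space M \<Longrightarrow> \<bar>u \<omega> - v \<omega>\<bar> \<le> e + g \<omega>"
  shows "\<bar>(\<integral>\<omega>. u \<omega> \<partial>M) - (\<integral>\<omega>. v \<omega> \<partial>M)\<bar> \<le> e + (\<integral>\<omega>. g \<omega> \<partial>M)"
proof -
  have "\<bar>(\<integral>\<omega>. u \<omega> \<partial>M) - (\<integral>\<omega>. v \<omega> \<partial>M)\<bar> = \<bar>\<integral>\<omega>. u \<omega> - v \<omega> \<partial>M\<bar>"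
    using assms(1,2) by simp
  also have "\<dots> \<le> (\<integral>\<omega>. \<bar>u \<omega> - v \<omega>\<bar> \<partial>M)"
    by (rule integral_abs_bound)
  also have "\<dots> \<le> (\<integral>\<omega>. e + g \<omega> \<partial>M)"
    using assms by (intro integral_mono) auto
  also have "\<dots> = e + (\<integral>\<omega>. g \<omega> \<partial>M)"
    using assms(3) by (simp add: prob_space)
  finally show ?thesis .
qed

lemma abs_diff_le_tail_cutoff:
  fixes u v :: real
  assumes "\<bar>u\<bar> \<le> F" "\<bar>v\<bar> \<le> F" "0 \<le> e" "norm z \<le> R + 1 \<Longrightarrow> \<bar>u - v\<bar> \<le> e"
  shows "\<bar>u - v\<bar> \<le> e + 2 * F * tail_cutoff R z"
proof (cases "norm z \<le> R + 1")
  case True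
  then show ?thesis
    using assms tail_cutoff_bounds[of R z] by (smt (verit) mult_nonneg_nonneg abs_ge_zero)
next
  case False
  then have "tail_cutoff R z = 1"
    unfolding tail_cutoff_def by simp
  then show ?thesis
    using assms(1-3) abs_triangle_ineq4[of u v] by simp
qed

lemma borel_measurable_continuous_on_RM:
  assumes f: "continuous_on (RM M) f" and A: "A \<in> borel_measurable P"
    and RM: "\<And>\<omega>. \<omega> \<in> space P \<Longrightarrow> A \<omega> \<in> RM M"
  shows "(\<lambda>\<omega>. f (A \<omega>)) \<in> borel_measurable P"
proof -
  define pr where "pr a = (\<lambda>m. if m \<in> {1..M} then a m else 0)" for a :: "nat \<Rightarrow> real"
  have "continuous_on UNIV pr"
    unfolding pr_def
  proof (intro continuous_on_coordinatewise_then_product)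
    show "continuous_on UNIV (\<lambda>a. if i \<in> {1..M} then a i else 0)" for i
      by (cases "i \<in> {1..M}") (simp_all only: if_P if_not_P if_True if_False continuous_on_product_coordinates continuous_on_const)
  qed
  moreover have "pr a \<in> RM M" for a
    unfolding pr_def RM_def by auto
  ultimately have "continuous_on UNIV (\<lambda>a. f (pr a))"
    by (intro continuous_on_compose2[OF f]) auto
  then have "(\<lambda>\<omega>. f (pr (A \<omega>))) \<in> borel_measurable P"
    by (rule borel_measurable_continuous_on[OF _ A])
  moreover have "\<omega> \<in> space P \<Longrightarrow> pr (A \<omega>) = A \<omega>" for \<omega>
    using RM unfolding pr_def RM_def by auto
  ultimately show ?thesis
    by (simp cong: measurable_cong)
qed

lemma tendsto_integral_approx_continuous_image:
  fixes Z :: "nat \<Rightarrow> 'a \<Rightarrow> 'v::real_normed_vector" and W :: "'b \<Rightarrow> 'v"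
    and A :: "nat \<Rightarrow> 'a \<Rightarrow> nat \<Rightarrow> real" and \<Phi> :: "'v \<Rightarrow> nat \<Rightarrow> real" and f :: "(nat \<Rightarrow> real) \<Rightarrow> real"
  assumes P: "prob_space P" and N: "prob_space N"
    and Zm: "\<And>n. Z n \<in> borel_measurable P" and Wm: "W \<in> borel_measurable N"
    and Am: "\<And>n. A n \<in> borel_measurable P"
    and conv: "\<And>g :: 'v \<Rightarrow> real. continuous_on UNIV g \<Longrightarrow> bounded (range g) \<Longrightarrow>
                 (\<lambda>n. \<integral>\<omega>. g (Z n \<omega>) \<partial>P) \<longlonglongrightarrow> (\<integral>\<omega>. g (W \<omega>) \<partial>N)"
    and \<Phi>c: "continuous_on UNIV \<Phi>" and \<Phi>RM: "\<And>z. \<Phi> z \<in> RM M" and ARM: "\<And>n \<omega>. A n \<omega> \<in> RM M"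
    and \<Phi>b: "\<And>R. \<exists>L. \<forall>z m. norm z \<le> R \<longrightarrow> \<bar>\<Phi> z m\<bar> \<le> L"
    and close: "\<And>R \<theta>. \<theta> > 0 \<Longrightarrow> \<forall>\<^sub>F n in sequentially. \<forall>\<omega>.
                  norm (Z n \<omega>) \<le> R \<longrightarrow> (\<forall>m. \<bar>A n \<omega> m - \<Phi> (Z n \<omega>) m\<bar> \<le> \<theta>)"
    and fc: "continuous_on (RM M) f" and fb: "bounded (f ` RM M)"
  shows "(\<lambda>n. \<integral>\<omega>. f (A n \<omega>) \<partial>P) \<longlonglongrightarrow> (\<integral>\<omega>. f (\<Phi> (W \<omega>)) \<partial>N)"
proof -
  interpret P: prob_space P by (rule P)
  interpret N: prob_space N by (rule N)
  obtain F where F: "\<And>a. a \<in> RM M \<Longrightarrow> \<bar>f a\<bar> \<le> F"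
    using fb unfolding bounded_real by blast
  have "F \<ge> 0"
    using F[of "\<lambda>_. 0"] by (simp add: RM_def)
  have f\<Phi>c: "continuous_on UNIV (\<lambda>z. f (\<Phi> z))"
    using \<Phi>RM by (intro continuous_on_compose2[OF fc \<Phi>c]) auto
  have f\<Phi>b: "bounded (range (\<lambda>z. f (\<Phi> z)))"
    using \<Phi>RM by (intro bounded_subset[OF fb]) auto
  have iA: "integrable P (\<lambda>\<omega>. f (A n \<omega>))" for n
    using F ARM borel_measurable_continuous_on_RM[OF fc Am ARM]
    by (intro P.integrable_const_bound[where B=F]) auto
  have iB: "integrable P (\<lambda>\<omega>. f (\<Phi> (Z n \<omega>)))" for n
    using F \<Phi>RM borel_measurable_continuous_on[OF f\<Phi>c Zm]
    by (intro P.integrable_const_bound[where B=F]) auto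
  have iT: "integrable P (\<lambda>\<omega>. 2 * F * tail_cutoff R (Z n \<omega>))" for n R
    using borel_measurable_continuous_on[OF continuous_on_tail_cutoff Zm]
    by (intro integrable_mult_right P.integrable_const_bound[where B=1])
       (auto simp: abs_of_nonneg tail_cutoff_bounds)
  have "(\<lambda>n. (\<integral>\<omega>. f (A n \<omega>) \<partial>P) - (\<integral>\<omega>. f (\<Phi> (Z n \<omega>)) \<partial>P)) \<longlonglongrightarrow> 0"
  proof (rule LIMSEQ_I)
    fix e :: real
    assume e: "e > 0"
    define et where "et = e / (8 * (F + 1))"
    have et: "et > 0" "2 * F * et \<le> e / 4"
      using e \<open>F \<ge> 0\<close> by (auto simp: et_def field_simps)
    obtain R where "R \<ge> 0" and tail: "(\<integral>\<omega>. tail_cutoff R (W \<omega>) \<partial>N) < et"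
      using N.tail_cutoff_integral_small[OF Wm et(1)] by blast
    obtain L where L: "\<And>z m. norm z \<le> R + 1 \<Longrightarrow> \<bar>\<Phi> z m\<bar> \<le> L"
      using \<Phi>b by blast
    then have "L \<ge> 0"
      using \<open>R \<ge> 0\<close> by (metis abs_ge_zero add_nonneg_nonneg norm_zero order_trans zero_le_one)
    obtain \<theta> where "\<theta> > 0" and unif: "\<And>a b. a \<in> RM M \<Longrightarrow> b \<in> RM M \<Longrightarrow> (\<forall>m. \<bar>b m\<bar> \<le> L)
        \<Longrightarrow> (\<forall>m. \<bar>a m - b m\<bar> \<le> \<theta>) \<Longrightarrow> \<bar>f a - f b\<bar> < e / 2"
      using uniformly_continuous_on_RM_box[OF fc \<open>L \<ge> 0\<close>, of "e / 2"] e by auto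
    have "\<forall>\<^sub>F n in sequentially. (\<integral>\<omega>. tail_cutoff R (Z n \<omega>) \<partial>P) < et"
      using order_tendstoD(2)[OF conv[of "tail_cutoff R", OF continuous_on_tail_cutoff bounded_range_tail_cutoff] tail] .
    then have "\<forall>\<^sub>F n in sequentially. \<bar>(\<integral>\<omega>. f (A n \<omega>) \<partial>P) - (\<integral>\<omega>. f (\<Phi> (Z n \<omega>)) \<partial>P)\<bar> < e"
      using close[OF \<open>\<theta> > 0\<close>, of "R + 1"]
    proof eventually_elim
      case (elim n)
      have "\<bar>f (A n \<omega>) - f (\<Phi> (Z n \<omega>))\<bar> \<le> e / 2 + 2 * F * tail_cutoff R (Z n \<omega>)" for \<omega>
        using F[OF ARM] F[OF \<Phi>RM] e elim(2) unif[OF ARM \<Phi>RM] L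
        by (intro abs_diff_le_tail_cutoff) (auto intro: less_imp_le)
      then have "\<bar>(\<integral>\<omega>. f (A n \<omega>) \<partial>P) - (\<integral>\<omega>. f (\<Phi> (Z n \<omega>)) \<partial>P)\<bar>
          \<le> e / 2 + (\<integral>\<omega>. 2 * F * tail_cutoff R (Z n \<omega>) \<partial>P)"
        by (intro P.abs_integral_diff_le iA iB iT)
      also have "\<dots> < e / 2 + 2 * F * et + e / 8"
      proof -
        have "2 * F * (\<integral>\<omega>. tail_cutoff R (Z n \<omega>) \<partial>P) \<le> 2 * F * et"
          using elim(1) \<open>F \<ge> 0\<close> by (intro mult_left_mono) auto
        then show ?thesis
          using e by simp
      qed
      finally show ?case
        using et(2) by linarith
    qed
    then show "\<exists>n0. \<forall>n\<ge>n0. norm ((\<integral>\<omega>. f (A n \<omega>) \<partial>P) - (\<integral>\<omega>. f (\<Phi> (Z n \<omega>)) \<partial>P) - 0) < e"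
      unfolding eventually_sequentially by simp
  qed
  from tendsto_add[OF this conv[OF f\<Phi>c f\<Phi>b]] show ?thesis
    by simp
qed

lemma Deltam_vec_approx_Qvec:
  assumes sp: "\<sigma> > 0" and Tp: "T > 0" and \<theta>: "\<theta> > 0"
    and wc: "continuous_on UNIV w" and w: "\<And>t. 0 \<le> w t \<and> w t \<le> 1"
  shows "\<forall>\<^sub>F n in sequentially. \<forall>x. norm (fluct_triple \<mu> \<sigma> T n x) \<le> R \<longrightarrow>
           (\<forall>m. \<bar>(if m \<in> {1..M} then real n * Deltam w T m n x else 0)
                 - Qvec w T \<mu> \<sigma> M (fluct_triple \<mu> \<sigma> T n x) m\<bar> \<le> \<theta>)"
proof -
  have "\<forall>\<^sub>F n in sequentially. \<forall>m\<in>{1..M}. \<forall>x. fluct_bounded \<mu> \<sigma> T (max R 1) n x \<longrightarrow>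
      \<bar>real n * Deltam w T m n x - Qm w T \<mu> \<sigma> (ecf_fluct \<mu> \<sigma> n x) (mean_fluct \<mu> n x) (sd_fluct \<sigma> n x) m\<bar> \<le> \<theta>"
    using sp Tp \<theta> wc w by (intro eventually_ball_finite ballI n_Deltam_approx) auto
  then show ?thesis
  proof (rule eventually_mono, intro allI impI)
    fix n x m
    assume approx: "\<forall>m\<in>{1..M}. \<forall>x. fluct_bounded \<mu> \<sigma> T (max R 1) n x \<longrightarrow>
        \<bar>real n * Deltam w T m n x - Qm w T \<mu> \<sigma> (ecf_fluct \<mu> \<sigma> n x) (mean_fluct \<mu> n x) (sd_fluct \<sigma> n x) m\<bar> \<le> \<theta>"
      and "norm (fluct_triple \<mu> \<sigma> T n x) \<le> R"
    then have "fluct_bounded \<mu> \<sigma> T (max R 1) n x"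
      by (intro fluct_bounded_if_norm_le) auto
    then show "\<bar>(if m \<in> {1..M} then real n * Deltam w T m n x else 0)
                 - Qvec w T \<mu> \<sigma> M (fluct_triple \<mu> \<sigma> T n x) m\<bar> \<le> \<theta>"
      using approx \<theta> Qvec_fluct_triple[OF _ sp] by (cases "m \<in> {1..M}") (auto simp: Qvec_def)
  qed
qed

lemma weak_conv_n_Deltam_vec:
  fixes P :: "'a measure" and N :: "'b measure" and X :: "nat \<Rightarrow> 'a \<Rightarrow> real"
  assumes P: "prob_space P" and N: "prob_space N" and Xm: "\<And>k. X k \<in> borel_measurable P"
    and sp: "\<sigma> > 0" and Tp: "T > 0" and wc: "continuous_on UNIV w" and w: "\<And>t. 0 \<le> w t \<and> w t \<le> 1"
    and Gc: "\<And>\<omega>. \<omega> \<in> space N \<Longrightarrow> continuous_on {-T/\<sigma>..T/\<sigma>} (G \<omega>)"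
    and Wm: "(\<lambda>\<omega>. (clampC (T/\<sigma>) (G \<omega>), Y1 \<omega>, Y2 \<omega>)) \<in> borel_measurable N"
    and conv: "weak_conv_on UNIV P (\<lambda>n \<omega>. fluct_triple \<mu> \<sigma> T n (\<lambda>k. X k \<omega>))
                 N (\<lambda>\<omega>. (clampC (T/\<sigma>) (G \<omega>), Y1 \<omega>, Y2 \<omega>))"
  shows "weak_conv_on (RM M) P (\<lambda>n \<omega> m. if m \<in> {1..M} then real n * Deltam w T m n (\<lambda>k. X k \<omega>) else 0)
           N (\<lambda>\<omega> m. if m \<in> {1..M} then Qm w T \<mu> \<sigma> (G \<omega>) (Y1 \<omega>) (Y2 \<omega>) m else 0)"
  unfolding weak_conv_on_def
proof (intro conjI allI ballI impI)
  fix f :: "(nat \<Rightarrow> real) \<Rightarrow> real"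
  assume fc: "continuous_on (RM M) f" and fb: "bounded (f ` RM M)"
  have XV: "(\<lambda>\<omega> k. X k \<omega>) \<in> borel_measurable P"
    using Xm by (intro measurable_coordinatewise_then_product) simp
  have "(\<lambda>n. \<integral>\<omega>. f (\<lambda>m. if m \<in> {1..M} then real n * Deltam w T m n (\<lambda>k. X k \<omega>) else 0) \<partial>P)
      \<longlonglongrightarrow> (\<integral>\<omega>. f (Qvec w T \<mu> \<sigma> M (clampC (T/\<sigma>) (G \<omega>), Y1 \<omega>, Y2 \<omega>)) \<partial>N)"
  proof (rule tendsto_integral_approx_continuous_image[OF P N _ Wm _ _ continuous_on_Qvec[OF sp Tp wc w]
        Qvec_in_RM _ _ _ fc fb])
    show "(\<lambda>\<omega>. fluct_triple \<mu> \<sigma> T n (\<lambda>k. X k \<omega>)) \<in> borel_measurable P" for n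
      by (rule borel_measurable_continuous_on[OF continuous_on_fluct_triple[OF sp Tp] XV])
    show "(\<lambda>\<omega> m. if m \<in> {1..M} then real n * Deltam w T m n (\<lambda>k. X k \<omega>) else 0) \<in> borel_measurable P" for n
      using borel_measurable_Deltam[OF Xm wc] by (intro measurable_coordinatewise_then_product) simp
    show "\<exists>L. \<forall>z m. norm z \<le> R \<longrightarrow> \<bar>Qvec w T \<mu> \<sigma> M z m\<bar> \<le> L" for R
      using abs_Qvec_le[OF sp Tp wc w] by blast
    show "\<forall>\<^sub>F n in sequentially. \<forall>\<omega>. norm (fluct_triple \<mu> \<sigma> T n (\<lambda>k. X k \<omega>)) \<le> R \<longrightarrow>
        (\<forall>m. \<bar>(if m \<in> {1..M} then real n * Deltam w T m n (\<lambda>k. X k \<omega>) else 0)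
              - Qvec w T \<mu> \<sigma> M (fluct_triple \<mu> \<sigma> T n (\<lambda>k. X k \<omega>)) m\<bar> \<le> \<theta>)" if "\<theta> > 0" for R \<theta>
      using Deltam_vec_approx_Qvec[OF sp Tp that wc w, of \<mu> R M] by (rule eventually_mono) blast
  qed (use conv in \<open>auto simp: weak_conv_on_def RM_def\<close>)
  moreover have "Qvec w T \<mu> \<sigma> M (clampC (T/\<sigma>) (G \<omega>), Y1 \<omega>, Y2 \<omega>)
      = (\<lambda>m. if m \<in> {1..M} then Qm w T \<mu> \<sigma> (G \<omega>) (Y1 \<omega>) (Y2 \<omega>) m else 0)" if "\<omega> \<in> space N" for \<omega>
    using Qm_clampC[OF Gc[OF that] sp] by (auto simp: Qvec_def)
  ultimately show "(\<lambda>n. \<integral>\<omega>. f (\<lambda>m. if m \<in> {1..M} then real n * Deltam w T m n (\<lambda>k. X k \<omega>) else 0) \<partial>P)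
      \<longlonglongrightarrow> (\<integral>\<omega>. f (\<lambda>m. if m \<in> {1..M} then Qm w T \<mu> \<sigma> (G \<omega>) (Y1 \<omega>) (Y2 \<omega>) m else 0) \<partial>N)"
    by (simp cong: Bochner_Integration.integral_cong)
qed (auto simp: RM_def)

theorem theorem2:
  fixes P :: "'a measure" and X :: "nat \<Rightarrow> 'a \<Rightarrow> real"
    and \<mu> \<sigma> T \<beta> :: real and M :: nat
    and N :: "'b measure" and G :: "'b \<Rightarrow> real \<Rightarrow> complex" and Y1 Y2 :: "'b \<Rightarrow> real"
  assumes "prob_space P"
    and "prob_space.indep_vars P (\<lambda>_. borel) X UNIV"
    and "\<And>k. distributed P lborel (X k) (normal_density \<mu> \<sigma>)"
    and "\<sigma> > 0" and "T > 0" and "\<beta> > 0"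
    and "prob_space N"
    and "\<And>\<omega>. \<omega> \<in> space N \<Longrightarrow> continuous_on {-T/\<sigma>..T/\<sigma>} (G \<omega>)"
    and "(\<lambda>\<omega>. (clampC (T/\<sigma>) (G \<omega>), Y1 \<omega>, Y2 \<omega>)) \<in> borel_measurable N"
    and "weak_conv_on UNIV P
           (\<lambda>n \<omega>. (clampC (T/\<sigma>) (\<lambda>t. complex_of_real (sqrt (real n)) * (ecf n (\<lambda>k. X k \<omega>) t - psiN \<mu> \<sigma> t)),
                    sqrt (real n) * (smean n (\<lambda>k. X k \<omega>) - \<mu>),
                    sqrt (real n) * (ssd n (\<lambda>k. X k \<omega>) - \<sigma>)))
           N (\<lambda>\<omega>. (clampC (T/\<sigma>) (G \<omega>), Y1 \<omega>, Y2 \<omega>))"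
  shows "weak_conv_on (RM M) P
           (\<lambda>n \<omega> m. if m \<in> {1..M}
               then real n * Deltam (\<lambda>t. exp (- \<beta> * t^2)) T m n (\<lambda>k. X k \<omega>) else 0)
           N (\<lambda>\<omega> m. if m \<in> {1..M}
               then Qm (\<lambda>t. exp (- \<beta> * t^2)) T \<mu> \<sigma> (G \<omega>) (Y1 \<omega>) (Y2 \<omega>) m else 0)"
proof -
  have wc: "continuous_on UNIV (\<lambda>t::real. exp (- \<beta> * t^2))"
    by (intro continuous_intros)
  have w: "0 \<le> exp (- \<beta> * t^2) \<and> exp (- \<beta> * t^2) \<le> 1" for t :: real
    using \<open>\<beta> > 0\<close> by simp
  have Xm: "X k \<in> borel_measurable P" for k
    using distributed_measurable[OF assms(3)] by simp
  note res = weak_conv_n_Deltam_vec[OF assms(1,7) Xm assms(4,5) wc w assms(8,9) assms(10)[folded fluct_triple_eq]]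
  show ?thesis
    using res by simp
qed

end
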